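(* Let $T$ be any staircase transformation on $[0,1)$, let $f$ be a $2$-wise constant roof function whose two height values are rationally independent, and let $\phi_t$ be the suspension flow built under $f$ over $T$. Then $\phi_t$ is a rank-one flow.
   Context: Staircase construction: fix a cutting sequence $(r_n)$ and initial interval $J=[0,a)$ (column $C_0$, height $1$). Column $C_n$ is obtained from $C_{n-1}$ (stacked equal-length intervals, the levels) by cutting into $r_n$ equal-width subcolumns, placing $i-1$ spacer intervals of the same width (taken consecutively from $[a,\infty)$) on the $i$-th subcolumn, and stacking the $(i+1)$-th subcolumn on the $i$-th; $T$ maps each non-top level by translation onto the level above; $a$ is chosen so that $J$ plus all spacers has total length $1$. $[0,a)$ is the non-spacer part, $[a,1)$ the spacer part. A $2$-wise constant function: $f$ takes two rationally independent values $p>q>0$, with $f=p$ on the non-spacer part and $f=q$ on the spacer part. Suspension flow: $X=\{(x,y):0\le y<f(x)\}$ with normalized Lebesgue measure $\mu$; points move up at unit speed and a point reaching $(x,f(x))$ jumps to $(T(x),0)$. A measure-preserving flow $\phi_t$ on a probability space $(X,\mathcal B,\mu)$ is rank-one if there exist measurable sets $A_n$, a decreasing sequence of times $t_n$ and an increasing sequence of integers $h_n$ such that: (1) $t_n\to0$; (2) $h_nt_n\to\infty$; (3) $\mu(\phi_{k_1t_n}A_n\cap\phi_{k_2t_n}A_n)=0$ for all distinct $k_1,k_2\in\{0,\dots,h_n-1\}$; (4) $\mu\big(X\setminus\bigcup_{k=0}^{h_n-1}\phi_{kt_n}(A_n)\big)\to0$ as $n\to\infty$. *)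

theory Defs
  imports "HOL-Analysis.Analysis"
begin

text \<open>Cutting sequence r: stage n (n >= 1) cuts into r n subcolumns.
  P r n = r 1 * ... * r n.\<close>
definition cut_prod :: "(nat \<Rightarrow> nat) \<Rightarrow> nat \<Rightarrow> nat" where
  "cut_prod r n = (\<Prod>k\<in>{1..n}. r k)"

text \<open>Height of column C_n (C_0 has height 1); the i-th subcolumn (1-indexed)
  receives i-1 spacers, so r_n (r_n - 1)/2 spacers are added at stage n.\<close>
primrec stair_height :: "(nat \<Rightarrow> nat) \<Rightarrow> nat \<Rightarrow> nat" where
  "stair_height r 0 = 1"
| "stair_height r (Suc n) =
     r (Suc n) * stair_height r n + r (Suc n) * (r (Suc n) - 1) div 2"

text \<open>Total spacer length measured in units of a (the length of J=[0,a)).\<close>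
definition stair_spacer_sum :: "(nat \<Rightarrow> nat) \<Rightarrow> real" where
  "stair_spacer_sum r =
     (\<Sum>n. real (r (Suc n) * (r (Suc n) - 1) div 2) / real (cut_prod r (Suc n)))"

text \<open>a is chosen so that J plus all spacers has total length 1.\<close>
definition stair_a :: "(nat \<Rightarrow> nat) \<Rightarrow> real" where
  "stair_a r = 1 / (1 + stair_spacer_sum r)"

definition stair_width :: "(nat \<Rightarrow> nat) \<Rightarrow> nat \<Rightarrow> real" where
  "stair_width r n = stair_a r / real (cut_prod r n)"

text \<open>Left end of the part of [a,1) from which the spacers of stage n are taken
  (spacers are taken consecutively: first those of stage 1, then stage 2, ...).\<close>
definition stair_spacer_start :: "(nat \<Rightarrow> nat) \<Rightarrow> nat \<Rightarrow> real" where
  "stair_spacer_start r n = stair_a r +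
     (\<Sum>k\<in>{1..<n}. stair_width r k * real (r k * (r k - 1) div 2))"

text \<open>Position (from the bottom, 0-indexed) in C_n at which the block formed by
  the (i+1)-th subcolumn together with its i spacers starts.\<close>
definition block_start :: "(nat \<Rightarrow> nat) \<Rightarrow> nat \<Rightarrow> nat \<Rightarrow> nat" where
  "block_start r n i = i * stair_height r n + i * (i - 1) div 2"

text \<open>Left endpoint of level j (0-indexed from the bottom) of column C_n.
  Level j of C_(n+1) lies in block i (the (i+1)-th subcolumn of C_n with its
  i spacers on top); at offset p inside the block it is either the (i+1)-th
  piece of level p of C_n, or the (p - h_n)-th spacer placed on that
  subcolumn.  Within stage n+1 spacers are taken consecutively in stacking
  order (bottom to top).\<close>
primrec stair_level :: "(nat \<Rightarrow> nat) \<Rightarrow> nat \<Rightarrow> nat \<Rightarrow> real" where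
  "stair_level r 0 = (\<lambda>j. 0)"
| "stair_level r (Suc n) = (\<lambda>j.
     let i = (LEAST i. j < block_start r n (Suc i));
         p = j - block_start r n i
     in if p < stair_height r n
        then stair_level r n p + real i * stair_width r (Suc n)
        else stair_spacer_start r (Suc n) +
             stair_width r (Suc n) * real (i * (i - 1) div 2 + (p - stair_height r n)))"

definition in_stair_level :: "(nat \<Rightarrow> nat) \<Rightarrow> nat \<Rightarrow> nat \<Rightarrow> real \<Rightarrow> bool" where
  "in_stair_level r n j x \<longleftrightarrow>
     j < stair_height r n \<and> stair_level r n j \<le> x \<and> x < stair_level r n j + stair_width r n"

text \<open>The staircase transformation: a point in a non-top level of some column
  is translated onto the level above (this is independent of the column used);
  on the remaining null set it is (arbitrarily) set to be the identity.\<close>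
definition staircase_T :: "(nat \<Rightarrow> nat) \<Rightarrow> real \<Rightarrow> real" where
  "staircase_T r x =
     (if \<exists>n j. Suc j < stair_height r n \<and> in_stair_level r n j x
      then (let (n, j) = (SOME (n, j). Suc j < stair_height r n \<and> in_stair_level r n j x)
            in x - stair_level r n j + stair_level r n (Suc j))
      else x)"

text \<open>Admissible cutting sequences: r n >= 2 at every stage, and the total spacer
  length is finite (so that the construction lives on [0,1)).\<close>
definition staircase_seq :: "(nat \<Rightarrow> nat) \<Rightarrow> bool" where
  "staircase_seq r \<longleftrightarrow> (\<forall>n\<ge>1. 2 \<le> r n) \<and>
     summable (\<lambda>n. real (r (Suc n) * (r (Suc n) - 1) div 2) / real (cut_prod r (Suc n)))"

definition two_wise_roof :: "(nat \<Rightarrow> nat) \<Rightarrow> real \<Rightarrow> real \<Rightarrow> real \<Rightarrow> real" where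
  "two_wise_roof r p q x = (if x < stair_a r then p else q)"

definition rationally_independent :: "real \<Rightarrow> real \<Rightarrow> bool" where
  "rationally_independent p q \<longleftrightarrow>
     (\<forall>m n :: int. real_of_int m * p + real_of_int n * q = 0 \<longrightarrow> m = 0 \<and> n = 0)"

definition susp_space :: "(real \<Rightarrow> real) \<Rightarrow> (real \<times> real) set" where
  "susp_space f = {(x, y). 0 \<le> x \<and> x < 1 \<and> 0 \<le> y \<and> y < f x}"

definition susp_measure :: "(real \<Rightarrow> real) \<Rightarrow> (real \<times> real) measure" where
  "susp_measure f = uniform_measure lborel (susp_space f)"

definition birkhoff_sum :: "(real \<Rightarrow> real) \<Rightarrow> (real \<Rightarrow> real) \<Rightarrow> nat \<Rightarrow> real \<Rightarrow> real" where
  "birkhoff_sum T f n x = (\<Sum>k<n. f ((T ^^ k) x))"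

text \<open>Suspension flow (for t >= 0): move up at unit speed; on reaching the roof
  jump from (x, f x) to (T x, 0).  After time t the point (x,y) has made n jumps,
  where n is least with y + t < f x + ... + f (T^n x).\<close>
definition susp_flow :: "(real \<Rightarrow> real) \<Rightarrow> (real \<Rightarrow> real) \<Rightarrow> real \<Rightarrow> real \<times> real \<Rightarrow> real \<times> real" where
  "susp_flow T f t z =
     (let x = fst z; y = snd z;
          n = (LEAST n. y + t < birkhoff_sum T f (Suc n) x)
      in ((T ^^ n) x, y + t - birkhoff_sum T f n x))"

definition measure_preserving_map :: "'a measure \<Rightarrow> ('a \<Rightarrow> 'a) \<Rightarrow> bool" where
  "measure_preserving_map M g \<longleftrightarrow> g \<in> measurable M M \<and> distr M M g = M"

text \<open>A measure-preserving flow (given for times t >= 0) on a probability space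
  which is rank-one.  The images of A_n under the flow are required to be
  measurable, so that their measures make sense.\<close>
definition rank_one_flow :: "'a measure \<Rightarrow> (real \<Rightarrow> 'a \<Rightarrow> 'a) \<Rightarrow> bool" where
  "rank_one_flow M \<phi> \<longleftrightarrow>
     emeasure M (space M) = 1 \<and>
     (\<forall>t\<ge>0. measure_preserving_map M (\<phi> t)) \<and>
     (AE z in M. \<phi> 0 z = z) \<and>
     (\<forall>s\<ge>0. \<forall>t\<ge>0. AE z in M. \<phi> (s + t) z = \<phi> s (\<phi> t z)) \<and>
     (\<exists>(A :: nat \<Rightarrow> 'a set) (t :: nat \<Rightarrow> real) (h :: nat \<Rightarrow> nat).
        (\<forall>n. A n \<in> sets M) \<and>
        decseq t \<and> incseq h \<and>
        t \<longlonglongrightarrow> 0 \<and>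
        filterlim (\<lambda>n. real (h n) * t n) at_top sequentially \<and>
        (\<forall>n. \<forall>k<h n. \<phi> (real k * t n) ` A n \<in> sets M) \<and>
        (\<forall>n k1 k2. k1 < h n \<and> k2 < h n \<and> k1 \<noteq> k2 \<longrightarrow>
           measure M (\<phi> (real k1 * t n) ` A n \<inter> \<phi> (real k2 * t n) ` A n) = 0) \<and>
        (\<lambda>n. measure M (space M - (\<Union>k<h n. \<phi> (real k * t n) ` A n))) \<longlonglongrightarrow> 0)"

end

theory Submission
  imports Defs
begin

text \<open>For each \<open>n\<close>, the time-zero map of the flow sends the rectangle
  \<open>[0, w\<^sub>n) \<times> [0, H\<^sub>n)\<close> bijectively onto the part of the suspension lying over the column
  \<open>C\<^sub>n\<close>, translating each horizontal strip \<open>[0, w\<^sub>n) \<times> [\<tau>\<^sub>k, \<tau>\<^sub>k\<^sub>+\<^sub>1)\<close> onto the part over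
  the \<open>k\<close>-th level; here \<open>w\<^sub>n\<close> is the width of the levels, \<open>\<tau>\<^sub>k\<close> the sum of the roof over
  the first \<open>k\<close> levels and \<open>H\<^sub>n\<close> its sum over the whole column.  On this rectangle the flow
  is a vertical translation, so it preserves Lebesgue measure up to an error \<open>w\<^sub>n t\<close> plus the
  measure of the part of the suspension outside the tower, and that error tends to \<open>0\<close>
  because the columns exhaust \<open>[0, 1)\<close>.  Cutting the rectangle into horizontal slabs of
  height \<open>t\<^sub>n = 1/(n + 1)\<close> gives the rank-one towers: the images of the bottom slab under
  \<open>\<phi>\<^bsub>k t\<^sub>n\<^esub>\<close> are the other slabs, and they miss a set of measure at most \<open>w\<^sub>n t\<^sub>n\<close> plus
  that of the complement of the tower.\<close>

section \<open>Combinatorics of the staircase columns\<close>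

lemma crossing_index:
  fixes g :: "nat \<Rightarrow> 'a::linorder"
  assumes "g 0 \<le> u" "u < g m"
  obtains k where "k < m" "g k \<le> u" "u < g (Suc k)"
proof -
  have "\<exists>k<m. g k \<le> u \<and> u < g (Suc k)"
    using assms(2)
  proof (induction m)
    case (Suc m)
    show ?case
    proof (cases "u < g m")
      case True
      then show ?thesis using Suc.IH less_SucI by blast
    next
      case False
      then show ?thesis using Suc.prems by (intro exI[of _ m]) auto
    qed
  qed (use assms(1) in simp)
  then show thesis using that by blast
qed

lemma triangle_Suc: "Suc i * i div 2 = i * (i - 1) div 2 + (i::nat)"
proof -
  have "Suc i * i = i * (i - 1) + 2 * i" by (cases i) (auto simp: algebra_simps)
  moreover have "even (i * (i - 1))" by (cases i) auto
  ultimately show ?thesis by fastforce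
qed

lemma triangle_mono_Suc:
  fixes i i' :: nat
  assumes "i < i'"
  shows "Suc i * i div 2 \<le> i' * (i' - 1) div 2"
  using assms by (intro div_le_mono mult_mono) auto

text \<open>The spacers added at stage \<open>n + 1\<close> are numbered consecutively in stacking order:
  the \<open>d\<close>-th spacer on the \<open>(i + 1)\<close>-th subcolumn has number \<open>i (i - 1) / 2 + d\<close>.\<close>

lemma spacer_index_bound:
  fixes i R d :: nat
  assumes "i < R" "d < i"
  shows "i * (i - 1) div 2 + d + 1 \<le> R * (R - 1) div 2"
  using triangle_Suc[of i] triangle_mono_Suc[OF assms(1)] assms(2) by linarith

lemma spacer_index_inj:
  fixes i1 i2 d1 d2 :: nat
  assumes "d1 < i1" "d2 < i2" "i1 * (i1 - 1) div 2 + d1 = i2 * (i2 - 1) div 2 + d2"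
  shows "i1 = i2 \<and> d1 = d2"
  using triangle_mono_Suc[of i1 i2] triangle_mono_Suc[of i2 i1] triangle_Suc[of i1] triangle_Suc[of i2]
    assms by (cases i1 i2 rule: linorder_cases) auto

lemma block_start_0 [simp]: "block_start r n 0 = 0"
  by (simp add: block_start_def)

lemma block_start_Suc: "block_start r n (Suc i) = block_start r n i + stair_height r n + i"
  unfolding block_start_def using triangle_Suc[of i] by (simp add: algebra_simps)

lemma block_start_mono: "i \<le> i' \<Longrightarrow> block_start r n i \<le> block_start r n i'"
proof (induction i' rule: dec_induct)
  case (step k)
  then show ?case using block_start_Suc[of r n k] by simp
qed simp

lemma stair_height_Suc_eq_block_start: "stair_height r (Suc n) = block_start r n (r (Suc n))"
  by (simp add: block_start_def mult.commute)

lemma block_position_lt_stair_height: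
  assumes "i < r (Suc n)" "p < stair_height r n + i"
  shows "block_start r n i + p < stair_height r (Suc n)"
  using block_start_mono[of "Suc i" "r (Suc n)" r n] block_start_Suc[of r n i] assms
    stair_height_Suc_eq_block_start[of r n] by linarith

lemma Least_block:
  assumes "p < stair_height r n + i"
  shows "(LEAST i'. block_start r n i + p < block_start r n (Suc i')) = i"
proof (rule Least_equality)
  show "block_start r n i + p < block_start r n (Suc i)"
    using assms block_start_Suc[of r n i] by simp
next
  fix i' assume "block_start r n i + p < block_start r n (Suc i')"
  then show "i \<le> i'" using block_start_mono[of "Suc i'" i r n] by (cases "i \<le> i'") auto
qed

lemma block_decomposition:
  assumes "j < stair_height r (Suc n)"
  obtains i p where "i < r (Suc n)" "p < stair_height r n + i" "j = block_start r n i + p"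
proof -
  obtain i where "i < r (Suc n)" "block_start r n i \<le> j" "j < block_start r n (Suc i)"
    using crossing_index[of "block_start r n" j "r (Suc n)"] assms
      stair_height_Suc_eq_block_start[of r n] by auto
  then show thesis
    using that[of i "j - block_start r n i"] block_start_Suc[of r n i] by simp
qed

lemma stair_level_Suc_column:
  assumes "p < stair_height r n"
  shows "stair_level r (Suc n) (block_start r n i + p) =
    stair_level r n p + real i * stair_width r (Suc n)"
  using assms Least_block[of p r n i] by (simp add: Let_def)

lemma stair_level_Suc_spacer:
  assumes "stair_height r n \<le> p" "p < stair_height r n + i"
  shows "stair_level r (Suc n) (block_start r n i + p) = stair_spacer_start r (Suc n) +
    stair_width r (Suc n) * real (i * (i - 1) div 2 + (p - stair_height r n))"
  using assms Least_block[of p r n i] by (simp add: Let_def)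

lemma cut_prod_Suc: "cut_prod r (Suc n) = cut_prod r n * r (Suc n)"
  unfolding cut_prod_def by (simp add: prod.cl_ivl_Suc)

lemma stair_spacer_start_1: "stair_spacer_start r (Suc 0) = stair_a r"
  unfolding stair_spacer_start_def by simp

lemma stair_spacer_start_Suc: "stair_spacer_start r (Suc (Suc n)) =
    stair_spacer_start r (Suc n) + stair_width r (Suc n) * real (r (Suc n) * (r (Suc n) - 1) div 2)"
  unfolding stair_spacer_start_def by simp

lemma grid_intervals_separated:
  fixes k1 k2 :: nat and c w :: real
  assumes "0 < w" "k1 \<noteq> k2"
  shows "c + real k1 * w + w \<le> c + real k2 * w \<or> c + real k2 * w + w \<le> c + real k1 * w"
proof -
  have "real k1 + 1 \<le> real k2 \<or> real k2 + 1 \<le> real k1" using assms(2) by linarith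
  then show ?thesis using assms(1) by (auto simp: algebra_simps dest: mult_right_mono[of _ _ w])
qed

definition stair_spacer_term :: "(nat \<Rightarrow> nat) \<Rightarrow> nat \<Rightarrow> real" where
  "stair_spacer_term r n = real (r (Suc n) * (r (Suc n) - 1) div 2) / real (cut_prod r (Suc n))"

lemma stair_spacer_sum_eq: "stair_spacer_sum r = suminf (stair_spacer_term r)"
  unfolding stair_spacer_sum_def stair_spacer_term_def ..

definition column_set :: "(nat \<Rightarrow> nat) \<Rightarrow> nat \<Rightarrow> real set" where
  "column_set r n = (\<Union>j<stair_height r n. {stair_level r n j..<stair_level r n j + stair_width r n})"

locale staircase =
  fixes r :: "nat \<Rightarrow> nat"
  assumes staircase_seq: "staircase_seq r"
begin

lemma cut_ge_2: "2 \<le> r (Suc n)"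
  using staircase_seq unfolding staircase_seq_def by auto

lemma summable_stair_spacer_term: "summable (stair_spacer_term r)"
  using staircase_seq unfolding staircase_seq_def stair_spacer_term_def[abs_def] by auto

lemma cut_prod_pos: "0 < cut_prod r n"
proof (induction n)
  case (Suc n)
  then show ?case using cut_ge_2[of n] by (simp add: cut_prod_Suc)
qed (simp add: cut_prod_def)

lemma stair_spacer_sum_nonneg: "0 \<le> stair_spacer_sum r"
  unfolding stair_spacer_sum_eq
  by (rule suminf_nonneg[OF summable_stair_spacer_term]) (simp add: stair_spacer_term_def)

lemma stair_a_pos: "0 < stair_a r"
  unfolding stair_a_def using stair_spacer_sum_nonneg by simp

lemma stair_a_le_1: "stair_a r \<le> 1"
  unfolding stair_a_def using stair_spacer_sum_nonneg by simp

lemma stair_width_pos: "0 < stair_width r n"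
  unfolding stair_width_def using stair_a_pos cut_prod_pos[of n] by simp

lemma stair_width_eq_Suc: "stair_width r n = real (r (Suc n)) * stair_width r (Suc n)"
  unfolding stair_width_def cut_prod_Suc using cut_ge_2[of n] cut_prod_pos[of n] by simp

lemma stair_a_le_spacer_start: "stair_a r \<le> stair_spacer_start r (Suc n)"
proof (induction n)
  case (Suc n)
  have "0 \<le> stair_width r (Suc n) * real (r (Suc n) * (r (Suc n) - 1) div 2)"
    using stair_width_pos[of "Suc n"] by simp
  then show ?case using Suc stair_spacer_start_Suc[of r n] by linarith
qed (simp add: stair_spacer_start_1)

lemma stair_spacer_start_le_Suc: "stair_spacer_start r (Suc n) \<le> stair_spacer_start r (Suc (Suc n))"
  using stair_spacer_start_Suc[of r n] stair_width_pos[of "Suc n"] by simp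

lemma stair_height_le_Suc: "stair_height r n \<le> stair_height r (Suc n)"
  using cut_ge_2[of n] by (simp add: add_increasing2)

lemma stair_height_ge: "Suc n \<le> stair_height r n"
proof (induction n)
  case (Suc n)
  have "2 * stair_height r n \<le> r (Suc n) * stair_height r n" using cut_ge_2[of n] by simp
  then show ?case using Suc unfolding stair_height.simps by linarith
qed simp

lemma stair_level_Suc_column_subset:
  assumes "i < r (Suc n)" "p < stair_height r n"
  shows "stair_level r n p \<le> stair_level r (Suc n) (block_start r n i + p)"
    and "stair_level r (Suc n) (block_start r n i + p) + stair_width r (Suc n) \<le>
      stair_level r n p + stair_width r n"
proof -
  let ?w = "stair_width r (Suc n)"
  have "(real i + 1) * ?w \<le> real (r (Suc n)) * ?w"
    using assms(1) stair_width_pos[of "Suc n"] by (intro mult_right_mono) auto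
  then show "stair_level r (Suc n) (block_start r n i + p) + ?w \<le> stair_level r n p + stair_width r n"
    using stair_level_Suc_column[OF assms(2)] stair_width_eq_Suc[of n] by (simp add: algebra_simps)
  show "stair_level r n p \<le> stair_level r (Suc n) (block_start r n i + p)"
    using stair_level_Suc_column[OF assms(2)] stair_width_pos[of "Suc n"] by simp
qed

lemma stair_level_Suc_spacer_bounds:
  assumes "i < r (Suc n)" "stair_height r n \<le> p" "p < stair_height r n + i"
  shows "stair_spacer_start r (Suc n) \<le> stair_level r (Suc n) (block_start r n i + p)"
    and "stair_level r (Suc n) (block_start r n i + p) + stair_width r (Suc n) \<le>
      stair_spacer_start r (Suc (Suc n))"
proof -
  let ?w = "stair_width r (Suc n)" and ?k = "i * (i - 1) div 2 + (p - stair_height r n)"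
  have "real ?k + 1 \<le> real (r (Suc n) * (r (Suc n) - 1) div 2)"
    using spacer_index_bound[of i "r (Suc n)" "p - stair_height r n"] assms by linarith
  then have "?w * (real ?k + 1) \<le> ?w * real (r (Suc n) * (r (Suc n) - 1) div 2)"
    using stair_width_pos[of "Suc n"] by (intro mult_left_mono) auto
  then show "stair_level r (Suc n) (block_start r n i + p) + ?w \<le> stair_spacer_start r (Suc (Suc n))"
    using stair_level_Suc_spacer[OF assms(2,3)] stair_spacer_start_Suc[of r n]
    by (simp add: algebra_simps)
  show "stair_spacer_start r (Suc n) \<le> stair_level r (Suc n) (block_start r n i + p)"
    using stair_level_Suc_spacer[OF assms(2,3)] stair_width_pos[of "Suc n"] by simp
qed

lemma stair_level_bounds:
  assumes "j < stair_height r n"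
  shows "0 \<le> stair_level r n j \<and>
    stair_level r n j + stair_width r n \<le> stair_spacer_start r (Suc n) \<and>
    (stair_level r n j + stair_width r n \<le> stair_a r \<or> stair_a r \<le> stair_level r n j)"
  using assms
proof (induction n arbitrary: j)
  case 0
  then show ?case by (simp add: stair_width_def cut_prod_def stair_spacer_start_1)
next
  case (Suc n)
  obtain i p where ip: "i < r (Suc n)" "p < stair_height r n + i" "j = block_start r n i + p"
    using block_decomposition[OF Suc.prems] .
  show ?case
  proof (cases "p < stair_height r n")
    case True
    let ?l = "stair_level r (Suc n) j"
    have lo: "stair_level r n p \<le> ?l"
      and hi: "?l + stair_width r (Suc n) \<le> stair_level r n p + stair_width r n"
      using stair_level_Suc_column_subset[OF ip(1) True] ip(3) by auto
    obtain "0 \<le> stair_level r n p" "stair_level r n p + stair_width r n \<le> stair_spacer_start r (Suc n)"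
      and side: "stair_level r n p + stair_width r n \<le> stair_a r \<or> stair_a r \<le> stair_level r n p"
      using Suc.IH[OF True] by blast
    moreover have "?l + stair_width r (Suc n) \<le> stair_a r \<or> stair_a r \<le> ?l"
      using side lo hi by (meson order_trans)
    ultimately show ?thesis using lo hi stair_spacer_start_le_Suc[of n] by linarith
  next
    case False
    then have "stair_spacer_start r (Suc n) \<le> stair_level r (Suc n) j"
      "stair_level r (Suc n) j + stair_width r (Suc n) \<le> stair_spacer_start r (Suc (Suc n))"
      using stair_level_Suc_spacer_bounds[OF ip(1) _ ip(2)] ip(3) by auto
    then show ?thesis using stair_a_le_spacer_start[of n] stair_a_pos by auto
  qed
qed

lemma stair_level_Suc_column_below_spacer:
  assumes "i < r (Suc n)" "p < stair_height r n"
    and "i' < r (Suc n)" "stair_height r n \<le> p'" "p' < stair_height r n + i'"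
  shows "stair_level r (Suc n) (block_start r n i + p) + stair_width r (Suc n) \<le>
    stair_level r (Suc n) (block_start r n i' + p')"
  using stair_level_Suc_column_subset(2)[OF assms(1,2)] stair_level_bounds[OF assms(2)]
    stair_level_Suc_spacer_bounds(1)[OF assms(3-5)] by linarith

lemma stair_level_Suc_spacers_separated:
  assumes "stair_height r n \<le> p1" "p1 < stair_height r n + i1"
    and "stair_height r n \<le> p2" "p2 < stair_height r n + i2" "(i1, p1) \<noteq> (i2, p2)"
  shows "stair_level r (Suc n) (block_start r n i1 + p1) + stair_width r (Suc n) \<le>
      stair_level r (Suc n) (block_start r n i2 + p2) \<or>
    stair_level r (Suc n) (block_start r n i2 + p2) + stair_width r (Suc n) \<le>
      stair_level r (Suc n) (block_start r n i1 + p1)"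
proof -
  let ?h = "stair_height r n"
  let ?k1 = "i1 * (i1 - 1) div 2 + (p1 - ?h)" and ?k2 = "i2 * (i2 - 1) div 2 + (p2 - ?h)"
  have "p1 - ?h < i1" "p2 - ?h < i2" using assms(1-4) by auto
  then have "?k1 \<noteq> ?k2" using spacer_index_inj[of "p1 - ?h" i1 "p2 - ?h" i2] assms by auto
  then show ?thesis
    using grid_intervals_separated[OF stair_width_pos, of ?k1 ?k2 "stair_spacer_start r (Suc n)" "Suc n"]
      stair_level_Suc_spacer[OF assms(1,2)] stair_level_Suc_spacer[OF assms(3,4)]
    by (simp add: mult.commute)
qed

lemma stair_levels_disjoint:
  assumes "j1 < stair_height r n" "j2 < stair_height r n" "j1 \<noteq> j2"
  shows "stair_level r n j1 + stair_width r n \<le> stair_level r n j2 \<or>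
    stair_level r n j2 + stair_width r n \<le> stair_level r n j1"
  using assms
proof (induction n arbitrary: j1 j2)
  case (Suc n)
  let ?h = "stair_height r n"
  obtain i1 p1 where ip1: "i1 < r (Suc n)" "p1 < ?h + i1" "j1 = block_start r n i1 + p1"
    using block_decomposition[OF Suc.prems(1)] .
  obtain i2 p2 where ip2: "i2 < r (Suc n)" "p2 < ?h + i2" "j2 = block_start r n i2 + p2"
    using block_decomposition[OF Suc.prems(2)] .
  consider "p1 < ?h" "p2 < ?h" "p1 = p2" | "p1 < ?h" "p2 < ?h" "p1 \<noteq> p2"
    | "p1 < ?h" "?h \<le> p2" | "?h \<le> p1" "p2 < ?h" | "?h \<le> p1" "?h \<le> p2"
    by linarith
  then show ?case
  proof cases
    case 1
    then have "i1 \<noteq> i2" using Suc.prems(3) ip1 ip2 by auto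
    then show ?thesis
      using grid_intervals_separated[OF stair_width_pos] stair_level_Suc_column[OF 1(1)] ip1 ip2 1
      by simp
  next
    case 2
    then show ?thesis unfolding ip1(3) ip2(3) using Suc.IH[OF 2]
      stair_level_Suc_column_subset[OF ip1(1) 2(1)] stair_level_Suc_column_subset[OF ip2(1) 2(2)]
      by linarith
  next
    case 3
    then show ?thesis
      using stair_level_Suc_column_below_spacer[OF ip1(1) 3(1) ip2(1) 3(2) ip2(2)] ip1 ip2 by simp
  next
    case 4
    then show ?thesis
      using stair_level_Suc_column_below_spacer[OF ip2(1) 4(2) ip1(1) 4(1) ip1(2)] ip1 ip2 by simp
  next
    case 5
    then show ?thesis
      using stair_level_Suc_spacers_separated[OF 5(1) ip1(2) 5(2) ip2(2)] Suc.prems(3) ip1(3) ip2(3)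
      by auto
  qed
qed simp

lemma in_stair_level_unique:
  "in_stair_level r n j1 x \<Longrightarrow> in_stair_level r n j2 x \<Longrightarrow> j1 = j2"
  using stair_levels_disjoint[of j1 n j2] unfolding in_stair_level_def by force

lemma in_stair_level_Suc:
  assumes "in_stair_level r n j x"
  obtains i where "i < r (Suc n)" "in_stair_level r (Suc n) (block_start r n i + j) x"
proof -
  let ?w = "stair_width r (Suc n)" and ?l = "stair_level r n j"
  have j: "j < stair_height r n" and x: "?l \<le> x" "x < ?l + stair_width r n"
    using assms unfolding in_stair_level_def by auto
  define y where "y = (x - ?l) / ?w"
  define i where "i = nat \<lfloor>y\<rfloor>"
  have "0 \<le> y" unfolding y_def using x stair_width_pos[of "Suc n"] by simp
  then have "real i \<le> y" "y < real i + 1" unfolding i_def by linarith+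
  then have i: "real i * ?w \<le> x - ?l" "x - ?l < (real i + 1) * ?w"
    unfolding y_def using stair_width_pos[of "Suc n"] by (simp_all add: le_divide_eq divide_less_eq)
  have "real i * ?w < real (r (Suc n)) * ?w"
    using i x stair_width_eq_Suc[of n] by linarith
  then have "i < r (Suc n)" using stair_width_pos[of "Suc n"] by simp
  moreover have "block_start r n i + j < stair_height r (Suc n)"
    using block_position_lt_stair_height[of i r n j] \<open>i < r (Suc n)\<close> j by simp
  ultimately show thesis
    using that[of i] i stair_level_Suc_column[OF j, of i]
    unfolding in_stair_level_def by (simp add: algebra_simps)
qed

text \<open>Refining the column does not change the translation that moves a point one level up;
  this is why \<open>staircase_T\<close> is well defined.\<close>

lemma in_stair_level_refine:
  assumes "in_stair_level r n j x" "Suc j < stair_height r n" "n \<le> m"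
  shows "\<exists>j'. in_stair_level r m j' x \<and> Suc j' < stair_height r m \<and>
    stair_level r m (Suc j') - stair_level r m j' = stair_level r n (Suc j) - stair_level r n j"
  using assms(3)
proof (induction m rule: dec_induct)
  case base
  then show ?case using assms(1,2) by blast
next
  case (step m)
  then obtain j' where j': "in_stair_level r m j' x" "Suc j' < stair_height r m"
    "stair_level r m (Suc j') - stair_level r m j' = stair_level r n (Suc j) - stair_level r n j"
    by blast
  obtain i where i: "i < r (Suc m)" "in_stair_level r (Suc m) (block_start r m i + j') x"
    using in_stair_level_Suc[OF j'(1)] .
  have "Suc (block_start r m i + j') < stair_height r (Suc m)"
    using block_position_lt_stair_height[of i r m "Suc j'"] i(1) j'(2) by simp
  moreover have "stair_level r (Suc m) (Suc (block_start r m i + j')) -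
      stair_level r (Suc m) (block_start r m i + j') = stair_level r m (Suc j') - stair_level r m j'"
    using stair_level_Suc_column[OF j'(2), of i] stair_level_Suc_column[of j' r m i] j'(2) by simp
  ultimately show ?case using i(2) j'(3) by auto
qed

lemma staircase_T_eq:
  assumes "in_stair_level r n j x" "Suc j < stair_height r n"
  shows "staircase_T r x = x - stair_level r n j + stair_level r n (Suc j)"
proof -
  let ?P = "\<lambda>(n, j). Suc j < stair_height r n \<and> in_stair_level r n j x"
  obtain n' j' where nj: "(SOME z. ?P z) = (n', j')" by (cases "SOME z. ?P z")
  have "?P (SOME z. ?P z)" by (rule someI[of ?P "(n, j)"]) (use assms in auto)
  then have P': "Suc j' < stair_height r n'" "in_stair_level r n' j' x" using nj by auto
  have T: "staircase_T r x = x - stair_level r n' j' + stair_level r n' (Suc j')"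
    unfolding staircase_T_def using assms nj by auto
  obtain j1 where j1: "in_stair_level r (max n n') j1 x"
    "stair_level r (max n n') (Suc j1) - stair_level r (max n n') j1 =
      stair_level r n (Suc j) - stair_level r n j"
    using in_stair_level_refine[OF assms, of "max n n'"] by auto
  obtain j2 where j2: "in_stair_level r (max n n') j2 x"
    "stair_level r (max n n') (Suc j2) - stair_level r (max n n') j2 =
      stair_level r n' (Suc j') - stair_level r n' j'"
    using in_stair_level_refine[OF P'(2,1), of "max n n'"] by auto
  show ?thesis using T j1(2) j2(2) in_stair_level_unique[OF j1(1) j2(1)] by simp
qed

lemma stair_level_0 [simp]: "stair_level r n 0 = 0"
proof (induction n)
  case (Suc n)
  then show ?case
    using stair_level_Suc_column[of 0 r n 0] stair_height_ge[of n] by simp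
qed simp

lemma funpow_staircase_T_base:
  assumes "0 \<le> x" "x < stair_width r n" "k < stair_height r n"
  shows "(staircase_T r ^^ k) x = x + stair_level r n k"
  using assms(3)
proof (induction k)
  case (Suc k)
  have "in_stair_level r n k (x + stair_level r n k)"
    unfolding in_stair_level_def using Suc.prems assms by simp
  then show ?case using Suc staircase_T_eq[of n k] by simp
qed simp

definition staircase_T_approx :: "nat \<Rightarrow> real \<Rightarrow> real" where
  "staircase_T_approx n x = x + (\<Sum>j<stair_height r n - 1.
     indicator {stair_level r n j..<stair_level r n j + stair_width r n} x *
       (stair_level r n (Suc j) - stair_level r n j))"

lemma staircase_T_approx_eq:
  assumes "in_stair_level r n j x" "Suc j < stair_height r n"
  shows "staircase_T_approx n x = staircase_T r x"
proof -
  have "x \<in> {stair_level r n i..<stair_level r n i + stair_width r n} \<longleftrightarrow> i = j"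
    if "i < stair_height r n" for i
    using in_stair_level_unique[of n i x j] assms(1) that unfolding in_stair_level_def by auto
  then have "staircase_T_approx n x = x + (\<Sum>i<stair_height r n - 1.
      if i = j then stair_level r n (Suc i) - stair_level r n i else 0)"
    unfolding staircase_T_approx_def by (intro arg_cong[where f="(+) x"] sum.cong) auto
  also have "\<dots> = staircase_T r x"
    using assms(2) staircase_T_eq[OF assms] by (simp add: less_diff_conv)
  finally show ?thesis .
qed

lemma staircase_T_approx_tendsto: "(\<lambda>n. staircase_T_approx n x) \<longlonglongrightarrow> staircase_T r x"
proof (cases "\<exists>n j. Suc j < stair_height r n \<and> in_stair_level r n j x")
  case True
  then obtain n j where nj: "Suc j < stair_height r n" "in_stair_level r n j x" by blast
  have "eventually (\<lambda>m. staircase_T_approx m x = staircase_T r x) sequentially"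
    unfolding eventually_sequentially
    using in_stair_level_refine[OF nj(2,1)] staircase_T_approx_eq by blast
  then show ?thesis by (rule tendsto_eventually)
next
  case False
  then have "indicator {stair_level r n j..<stair_level r n j + stair_width r n} x = (0::real)"
    if "j < stair_height r n - 1" for n j
    using that unfolding in_stair_level_def by (auto simp: indicator_def)
  then have "staircase_T_approx n x = x" for n
    unfolding staircase_T_approx_def by simp
  moreover have "staircase_T r x = x" unfolding staircase_T_def using False by auto
  ultimately show ?thesis by simp
qed

lemma staircase_T_approx_measurable: "staircase_T_approx n \<in> borel_measurable borel"
  unfolding staircase_T_approx_def[abs_def] by measurable

lemma staircase_T_measurable [measurable]: "staircase_T r \<in> borel_measurable borel"
  by (rule borel_measurable_LIMSEQ_real[OF staircase_T_approx_tendsto staircase_T_approx_measurable])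

lemma stair_spacer_start_eq:
  "stair_spacer_start r (Suc n) = stair_a r * (1 + (\<Sum>k<n. stair_spacer_term r k))"
proof (induction n)
  case (Suc n)
  have "stair_width r (Suc n) * real (r (Suc n) * (r (Suc n) - 1) div 2) =
      stair_a r * stair_spacer_term r n"
    unfolding stair_width_def stair_spacer_term_def by simp
  then show ?case using Suc stair_spacer_start_Suc[of r n] by (simp add: algebra_simps)
qed (simp add: stair_spacer_start_1)

lemma stair_a_mult_total: "stair_a r * (1 + suminf (stair_spacer_term r)) = 1"
  unfolding stair_a_def stair_spacer_sum_eq[symmetric] using stair_spacer_sum_nonneg by simp

lemma stair_spacer_start_le_1: "stair_spacer_start r (Suc n) \<le> 1"
proof -
  have "(\<Sum>k<n. stair_spacer_term r k) \<le> suminf (stair_spacer_term r)"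
    by (rule sum_le_suminf[OF summable_stair_spacer_term]) (auto simp: stair_spacer_term_def)
  then have "stair_a r * (1 + (\<Sum>k<n. stair_spacer_term r k)) \<le>
      stair_a r * (1 + suminf (stair_spacer_term r))"
    using stair_a_pos by (intro mult_left_mono) auto
  then show ?thesis unfolding stair_spacer_start_eq stair_a_mult_total .
qed

lemma stair_spacer_start_tendsto_1: "(\<lambda>n. stair_spacer_start r (Suc n)) \<longlonglongrightarrow> 1"
proof -
  have "(\<lambda>n. stair_a r * (1 + (\<Sum>k<n. stair_spacer_term r k))) \<longlonglongrightarrow>
      stair_a r * (1 + suminf (stair_spacer_term r))"
    by (intro tendsto_intros summable_LIMSEQ summable_stair_spacer_term)
  then show ?thesis unfolding stair_spacer_start_eq stair_a_mult_total .
qed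

lemma stair_height_mult_width:
  "real (stair_height r n) * stair_width r n = stair_spacer_start r (Suc n)"
proof (induction n)
  case (Suc n)
  let ?R = "r (Suc n)" and ?w = "stair_width r (Suc n)"
  have "real (stair_height r (Suc n)) * ?w =
      real (stair_height r n) * (real ?R * ?w) + ?w * real (?R * (?R - 1) div 2)"
    by (simp add: algebra_simps)
  then show ?case using Suc stair_width_eq_Suc[of n] stair_spacer_start_Suc[of r n] by simp
qed (simp add: stair_width_def cut_prod_def stair_spacer_start_1)

lemma stair_width_tendsto_0: "(\<lambda>n. stair_width r n) \<longlonglongrightarrow> 0"
proof (rule tendsto_sandwich[of "\<lambda>_. 0" _ _ "\<lambda>n. 1 / real (Suc n)"])
  have "real (Suc n) * stair_width r n \<le> real (stair_height r n) * stair_width r n" for n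
    using stair_height_ge[of n] stair_width_pos[of n] by (intro mult_right_mono) auto
  then have "real (Suc n) * stair_width r n \<le> 1" for n
    using stair_height_mult_width[of n] stair_spacer_start_le_1[of n] by (metis order_trans)
  then show "\<forall>\<^sub>F n in sequentially. stair_width r n \<le> 1 / real (Suc n)"
    by (simp add: field_simps)
  show "\<forall>\<^sub>F n in sequentially. 0 \<le> stair_width r n" using stair_width_pos by (simp add: less_imp_le)
  show "(\<lambda>n. 1 / real (Suc n)) \<longlonglongrightarrow> 0"
    using LIMSEQ_inverse_real_of_nat by (simp add: inverse_eq_divide)
qed simp

lemma column_set_subset: "column_set r n \<subseteq> {0..<1}"
  unfolding column_set_def using stair_level_bounds stair_spacer_start_le_1[of n] by fastforce

lemma measure_column_set: "measure lborel (column_set r n) = stair_spacer_start r (Suc n)"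
proof -
  have "measure lborel (column_set r n) =
      (\<Sum>j<stair_height r n. measure lborel {stair_level r n j..<stair_level r n j + stair_width r n})"
    unfolding column_set_def
  proof (rule measure_finite_Union)
    show "disjoint_family_on (\<lambda>j. {stair_level r n j..<stair_level r n j + stair_width r n})
        {..<stair_height r n}"
      unfolding disjoint_family_on_def using stair_levels_disjoint[of _ n] by fastforce
  qed (use stair_width_pos[of n] in auto)
  then show ?thesis using stair_width_pos[of n] stair_height_mult_width[of n] by simp
qed

end

section \<open>Suspension flows\<close>

lemma birkhoff_sum_0 [simp]: "birkhoff_sum T f 0 x = 0"
  by (simp add: birkhoff_sum_def)

lemma birkhoff_sum_Suc: "birkhoff_sum T f (Suc n) x = birkhoff_sum T f n x + f ((T ^^ n) x)"
  by (simp add: birkhoff_sum_def)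

lemma funpow_add_apply: "(T ^^ (k + m)) x = (T ^^ m) ((T ^^ k) x)"
  by (metis add.commute comp_apply funpow_add)

lemma birkhoff_sum_add:
  "birkhoff_sum T f (k + m) x = birkhoff_sum T f k x + birkhoff_sum T f m ((T ^^ k) x)"
proof (induction m)
  case (Suc m)
  then show ?case by (simp add: birkhoff_sum_Suc funpow_add_apply)
qed simp

lemma susp_flow_shift: "susp_flow T f t (x, y) = susp_flow T f 0 (x, y + t)"
  by (simp add: susp_flow_def Let_def)

lemma funpow_measurable: "T \<in> measurable M M \<Longrightarrow> T ^^ k \<in> measurable M M"
  by (induction k) (simp_all add: funpow_Suc_right)

lemma birkhoff_sum_measurable:
  assumes [measurable]: "T \<in> measurable M M" "f \<in> borel_measurable M"
  shows "birkhoff_sum T f k \<in> borel_measurable M"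
proof -
  have [measurable]: "T ^^ i \<in> measurable M M" for i by (rule funpow_measurable) simp
  show ?thesis unfolding birkhoff_sum_def[abs_def] by measurable
qed

lemma susp_flow_measurable [measurable]:
  assumes [measurable]: "T \<in> borel_measurable borel" "f \<in> borel_measurable borel"
  shows "susp_flow T f t \<in> borel_measurable borel"
proof -
  let ?S = "birkhoff_sum T f" and ?M = "borel \<Otimes>\<^sub>M borel :: (real \<times> real) measure"
  have [measurable]: "T ^^ n \<in> borel_measurable borel" for n
    by (rule funpow_measurable) simp
  have [measurable]: "?S n \<in> borel_measurable borel" for n
    by (rule birkhoff_sum_measurable) simp_all
  have jumps: "(\<lambda>z. LEAST n. snd z + t < ?S (Suc n) (fst z)) \<in> ?M \<rightarrow>\<^sub>M count_space UNIV"
    by measurable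
  have position: "(\<lambda>z. ((T ^^ n) (fst z), snd z + t - ?S n (fst z))) \<in> ?M \<rightarrow>\<^sub>M ?M" for n
    by measurable
  have "(\<lambda>z. (\<lambda>n z. ((T ^^ n) (fst z), snd z + t - ?S n (fst z)))
      (LEAST n. snd z + t < ?S (Suc n) (fst z)) z) \<in> ?M \<rightarrow>\<^sub>M ?M"
    by (rule measurable_compose_countable[OF position jumps])
  then show ?thesis unfolding susp_flow_def[abs_def] borel_prod by (simp add: Let_def)
qed

locale suspension =
  fixes T :: "real \<Rightarrow> real" and f :: "real \<Rightarrow> real" and c :: real
  assumes roof_ge: "c \<le> f x"
    and roof_bound_pos: "0 < c"
begin

lemma birkhoff_sum_mono: "k \<le> m \<Longrightarrow> birkhoff_sum T f k x \<le> birkhoff_sum T f m x"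
proof (induction m rule: dec_induct)
  case (step m)
  then show ?case using roof_ge[of "(T ^^ m) x"] roof_bound_pos by (simp add: birkhoff_sum_Suc)
qed simp

lemma birkhoff_sum_ge: "real m * c \<le> birkhoff_sum T f m x"
proof (induction m)
  case (Suc m)
  then show ?case using roof_ge[of "(T ^^ m) x"] by (simp add: birkhoff_sum_Suc algebra_simps)
qed simp

lemma birkhoff_sum_nonneg: "0 \<le> birkhoff_sum T f m x"
  using birkhoff_sum_mono[of 0 m x] by simp

lemma ex_less_birkhoff_sum: "\<exists>n. u < birkhoff_sum T f (Suc n) x"
proof -
  obtain n :: nat where "u / c < real n" using reals_Archimedean2 by blast
  then have "u < real (Suc n) * c" using roof_bound_pos by (simp add: divide_less_eq algebra_simps)
  then show ?thesis using birkhoff_sum_ge[of "Suc n" x] by (blast intro: less_le_trans)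
qed

lemma susp_flow_0_eqI:
  assumes "birkhoff_sum T f n x \<le> u" "u < birkhoff_sum T f (Suc n) x"
  shows "susp_flow T f 0 (x, u) = ((T ^^ n) x, u - birkhoff_sum T f n x)"
proof -
  have "(LEAST m. u + 0 < birkhoff_sum T f (Suc m) x) = n"
  proof (rule Least_equality)
    fix m assume "u + 0 < birkhoff_sum T f (Suc m) x"
    then show "n \<le> m" using birkhoff_sum_mono[of "Suc m" n x] assms(1) by (cases "n \<le> m") auto
  qed (use assms(2) in simp)
  then show ?thesis unfolding susp_flow_def by (simp add: Let_def)
qed

lemma susp_flow_0_cases:
  obtains n where "n = 0 \<or> birkhoff_sum T f n x \<le> u" "u < birkhoff_sum T f (Suc n) x"
    "susp_flow T f 0 (x, u) = ((T ^^ n) x, u - birkhoff_sum T f n x)"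
proof -
  define n where "n = (LEAST n. u < birkhoff_sum T f (Suc n) x)"
  have "u < birkhoff_sum T f (Suc n) x"
    unfolding n_def using ex_less_birkhoff_sum by (rule LeastI_ex)
  moreover have "n = 0 \<or> birkhoff_sum T f n x \<le> u"
    using not_less_Least[of "n - 1" "\<lambda>n. u < birkhoff_sum T f (Suc n) x"]
    unfolding n_def[symmetric] by (cases n) auto
  moreover have "susp_flow T f 0 (x, u) = ((T ^^ n) x, u - birkhoff_sum T f n x)"
    unfolding susp_flow_def n_def by (simp add: Let_def)
  ultimately show thesis using that by blast
qed

lemma susp_flow_0_id: "0 \<le> y \<Longrightarrow> y < f x \<Longrightarrow> susp_flow T f 0 (x, y) = (x, y)"
  using susp_flow_0_eqI[of 0 x y] by (simp add: birkhoff_sum_Suc)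

lemma susp_flow_0_funpow:
  assumes "0 \<le> v"
  shows "susp_flow T f 0 ((T ^^ k) x, v) = susp_flow T f 0 (x, v + birkhoff_sum T f k x)"
proof -
  obtain n where n: "birkhoff_sum T f n ((T ^^ k) x) \<le> v" "v < birkhoff_sum T f (Suc n) ((T ^^ k) x)"
    "susp_flow T f 0 ((T ^^ k) x, v) = ((T ^^ n) ((T ^^ k) x), v - birkhoff_sum T f n ((T ^^ k) x))"
    using susp_flow_0_cases[of "(T ^^ k) x" v] assms by (metis birkhoff_sum_0)
  have "susp_flow T f 0 (x, v + birkhoff_sum T f k x) =
      ((T ^^ (k + n)) x, v + birkhoff_sum T f k x - birkhoff_sum T f (k + n) x)"
    using n(1,2) birkhoff_sum_add[of T f k n x] birkhoff_sum_add[of T f k "Suc n" x]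
    by (intro susp_flow_0_eqI) auto
  then show ?thesis using n(3) birkhoff_sum_add[of T f k n x] by (simp add: funpow_add_apply)
qed

lemma susp_flow_add:
  assumes "0 \<le> s"
  shows "susp_flow T f (s + t) z = susp_flow T f s (susp_flow T f t z)"
proof -
  obtain x y where z: "z = (x, y)" by fastforce
  obtain n where n: "n = 0 \<or> birkhoff_sum T f n x \<le> y + t"
    "susp_flow T f 0 (x, y + t) = ((T ^^ n) x, y + t - birkhoff_sum T f n x)"
    using susp_flow_0_cases[of x "y + t"] by blast
  have "susp_flow T f s (susp_flow T f t z) =
      susp_flow T f 0 ((T ^^ n) x, y + t - birkhoff_sum T f n x + s)"
    unfolding z susp_flow_shift[of T f t] n(2) susp_flow_shift[of T f s] ..
  also have "\<dots> = susp_flow T f 0 (x, y + (s + t))"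
    using n(1) susp_flow_0_funpow[of "y + t - birkhoff_sum T f n x + s" n x] assms
    by (auto simp: algebra_simps)
  finally show ?thesis unfolding z susp_flow_shift[of T f "s + t"] by simp
qed

end

section \<open>Measure-theoretic tools\<close>

lemma translation_image_eq_vimage:
  fixes d :: "'a::group_add"
  shows "(\<lambda>z. z + d) ` A = (\<lambda>z. z - d) -` A"
  by (force simp: image_iff)

lemma emeasure_lborel_translation_vimage:
  fixes d :: "'a::euclidean_space"
  assumes "A \<in> sets borel"
  shows "emeasure lborel ((\<lambda>z. z + d) -` A) = emeasure lborel A"
proof -
  have "emeasure lborel A = emeasure (distr lborel borel ((+) d)) A"
    by (simp only: lborel_distr_plus)
  also have "\<dots> = emeasure lborel ((+) d -` A)"
    using assms by (subst emeasure_distr) auto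
  also have "(+) d -` A = (\<lambda>z. z + d) -` A" by (auto simp: add.commute)
  finally show ?thesis by simp
qed

lemma sets_translation_image:
  fixes d :: "'a::euclidean_space"
  assumes "A \<in> sets borel"
  shows "(\<lambda>z. z + d) ` A \<in> sets borel"
proof -
  have "(\<lambda>z. z - d) \<in> borel_measurable borel"
    by (intro borel_measurable_continuous_onI continuous_intros)
  then show ?thesis unfolding translation_image_eq_vimage using assms by (rule measurable_sets_borel)
qed

lemma emeasure_translation_image_Int:
  fixes d :: "'a::euclidean_space"
  assumes "A \<in> sets borel" "E \<in> sets borel"
  shows "emeasure lborel (A \<inter> (\<lambda>z. z + d) -` E) = emeasure lborel ((\<lambda>z. z + d) ` A \<inter> E)"
proof -
  have "emeasure lborel (A \<inter> (\<lambda>z. z + d) -` E) =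
      emeasure lborel ((\<lambda>z. z + d) -` ((\<lambda>z. z + d) ` A \<inter> E))"
    by (rule arg_cong[where f = "emeasure lborel"]) auto
  also have "\<dots> = emeasure lborel ((\<lambda>z. z + d) ` A \<inter> E)"
    using sets_translation_image[OF assms(1)] assms(2) by (intro emeasure_lborel_translation_vimage) auto
  finally show ?thesis .
qed

context
  fixes g :: "'a::euclidean_space \<Rightarrow> 'a" and D :: "'i \<Rightarrow> 'a set" and d :: "'i \<Rightarrow> 'a" and I
  assumes translate: "\<And>i z. i \<in> I \<Longrightarrow> z \<in> D i \<Longrightarrow> g z = z + d i"
    and sets_pieces: "\<And>i. i \<in> I \<Longrightarrow> D i \<in> sets borel"
    and finite_index: "finite I"
begin

lemma image_piecewise_translation: "i \<in> I \<Longrightarrow> g ` D i = (\<lambda>z. z + d i) ` D i"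
  using translate by (auto simp: image_iff)

lemma sets_image_piecewise_translation: "g ` (\<Union>i\<in>I. D i) \<in> sets borel"
  unfolding image_UN
  by (intro sets.finite_UN finite_index) (simp add: image_piecewise_translation sets_translation_image sets_pieces)

lemma emeasure_vimage_piecewise_translation:
  assumes "disjoint_family_on D I" "disjoint_family_on (\<lambda>i. g ` D i) I" "E \<in> sets borel"
  shows "emeasure lborel (g -` E \<inter> (\<Union>i\<in>I. D i)) = emeasure lborel (E \<inter> g ` (\<Union>i\<in>I. D i))"
proof -
  have sets_image: "g ` D i \<in> sets borel" if "i \<in> I" for i
    using image_piecewise_translation[OF that] sets_translation_image sets_pieces[OF that] by simp
  have "g -` E \<inter> (\<Union>i\<in>I. D i) = (\<Union>i\<in>I. D i \<inter> (\<lambda>z. z + d i) -` E)"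
    using translate by auto
  also have "emeasure lborel \<dots> = (\<Sum>i\<in>I. emeasure lborel (D i \<inter> (\<lambda>z. z + d i) -` E))"
  proof (rule sum_emeasure[symmetric])
    show "disjoint_family_on (\<lambda>i. D i \<inter> (\<lambda>z. z + d i) -` E) I"
      using assms(1) unfolding disjoint_family_on_def by blast
  qed (use sets_pieces assms(3) finite_index in auto)
  also have "\<dots> = (\<Sum>i\<in>I. emeasure lborel (g ` D i \<inter> E))"
    using sets_pieces assms(3) image_piecewise_translation
    by (auto intro!: sum.cong emeasure_translation_image_Int)
  also have "\<dots> = emeasure lborel (\<Union>i\<in>I. g ` D i \<inter> E)"
  proof (rule sum_emeasure)
    show "disjoint_family_on (\<lambda>i. g ` D i \<inter> E) I"
      using assms(2) unfolding disjoint_family_on_def by blast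
  qed (use sets_image assms(3) finite_index in auto)
  also have "(\<Union>i\<in>I. g ` D i \<inter> E) = E \<inter> g ` (\<Union>i\<in>I. D i)" by blast
  finally show ?thesis .
qed

end

lemma emeasure_lborel_Times:
  fixes A :: "'a::euclidean_space set" and B :: "'b::euclidean_space set"
  assumes "A \<in> sets borel" "B \<in> sets borel"
  shows "emeasure lborel (A \<times> B) = emeasure lborel A * emeasure lborel B"
  using assms by (simp add: lborel_prod[symmetric] lborel.emeasure_pair_measure_Times)

lemma sets_Times_borel:
  fixes A :: "'a::euclidean_space set" and B :: "'b::euclidean_space set"
  assumes "A \<in> sets borel" "B \<in> sets borel"
  shows "A \<times> B \<in> sets borel"
proof -
  have "A \<times> B \<in> sets (borel \<Otimes>\<^sub>M borel)" by (rule pair_measureI[OF assms])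
  then show ?thesis by (simp only: borel_prod)
qed

lemma measure_Int_diff_le:
  assumes "S \<in> fmeasurable M" "A \<in> sets M" "A \<subseteq> S" "Y \<in> sets M"
  shows "\<bar>measure M (Y \<inter> S) - measure M (Y \<inter> A)\<bar> \<le> measure M (S - A)"
proof -
  have fm: "Y \<inter> A \<in> fmeasurable M" "Y \<inter> S \<in> fmeasurable M" "S - A \<in> fmeasurable M"
    using assms by (auto intro: fmeasurableI2[OF assms(1)])
  have "measure M (Y \<inter> A \<union> Y \<inter> S) = measure M (Y \<inter> A) + measure M (Y \<inter> S - Y \<inter> A)"
    by (rule measure_Un2[OF fm(1,2)])
  moreover have "Y \<inter> A \<union> Y \<inter> S = Y \<inter> S" using assms(3) by blast
  moreover have "measure M (Y \<inter> S - Y \<inter> A) \<le> measure M (S - A)"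
    using fm by (intro measure_mono_fmeasurable) auto
  ultimately show ?thesis by simp
qed

lemma measure_preserving_map_uniform_measure:
  assumes "S \<in> fmeasurable M" "g \<in> measurable M M"
    and "\<And>B. B \<in> sets M \<Longrightarrow> measure M (g -` B \<inter> S) = measure M (B \<inter> S)"
  shows "measure_preserving_map (uniform_measure M S) g"
  unfolding measure_preserving_map_def
proof
  show g: "g \<in> uniform_measure M S \<rightarrow>\<^sub>M uniform_measure M S"
    using assms(2) by simp
  show "distr (uniform_measure M S) (uniform_measure M S) g = uniform_measure M S"
  proof (rule measure_eqI)
    fix B assume "B \<in> sets (distr (uniform_measure M S) (uniform_measure M S) g)"
    then have B: "B \<in> sets M" by simp
    have "S \<in> sets M" using assms(1) by (rule fmeasurableD)
    then have S: "S \<in> sets M" "S \<subseteq> space M" using sets.sets_into_space by auto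
    have pre: "g -` B \<inter> space M \<in> sets M" using measurable_sets[OF assms(2) B] .
    have fin: "emeasure M (X \<inter> S) = measure M (X \<inter> S)" if "X \<in> sets M" for X
      using fmeasurableI2[OF assms(1), of "X \<inter> S"] that S by (intro emeasure_eq_measure2) auto
    have "g -` B \<inter> space M \<inter> S = g -` B \<inter> S" using S by auto
    then have "emeasure M (g -` B \<inter> space M \<inter> S) = emeasure M (B \<inter> S)"
      using fin[OF pre] fin[OF B] assms(3)[OF B] by simp
    moreover have "emeasure (distr (uniform_measure M S) (uniform_measure M S) g) B =
        emeasure M (S \<inter> (g -` B \<inter> space M)) / emeasure M S"
      using g B pre S by (simp add: emeasure_distr)
    moreover have "S \<inter> (g -` B \<inter> space M) = g -` B \<inter> space M \<inter> S" by blast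
    moreover have "emeasure (uniform_measure M S) B = emeasure M (B \<inter> S) / emeasure M S"
      using B S by (simp add: inf_commute[of S B])
    ultimately show "emeasure (distr (uniform_measure M S) (uniform_measure M S) g) B =
        emeasure (uniform_measure M S) B" by simp
  qed simp
qed

section \<open>The tower over a column\<close>

definition base_rect :: "(nat \<Rightarrow> nat) \<Rightarrow> nat \<Rightarrow> real \<Rightarrow> real \<Rightarrow> (real \<times> real) set" where
  "base_rect r n \<alpha> \<beta> = {0..<stair_width r n} \<times> {\<alpha>..<\<beta>}"

lemma sets_base_rect: "base_rect r n \<alpha> \<beta> \<in> sets borel"
  unfolding base_rect_def by (intro sets_Times_borel) auto

lemma translate_base_rect:
  "(\<lambda>z. z + (0, s)) ` base_rect r n \<alpha> \<beta> = base_rect r n (\<alpha> + s) (\<beta> + s)"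
  unfolding translation_image_eq_vimage base_rect_def by auto

lemma base_rect_split:
  assumes "\<alpha> \<le> \<beta>" "\<beta> \<le> \<gamma>"
  shows "base_rect r n \<alpha> \<gamma> = base_rect r n \<alpha> \<beta> \<union> base_rect r n \<beta> \<gamma>"
  using assms unfolding base_rect_def by auto

locale staircase_suspension = staircase r for r +
  fixes p q :: real
  assumes q_pos: "0 < q" and q_less_p: "q < p"
begin

abbreviation roof :: "real \<Rightarrow> real" where
  "roof \<equiv> two_wise_roof r p q"

abbreviation tower_map :: "real \<times> real \<Rightarrow> real \<times> real" where
  "tower_map \<equiv> susp_flow (staircase_T r) roof 0"

sublocale suspension "staircase_T r" roof q
  using q_pos q_less_p by unfold_locales (simp add: two_wise_roof_def)

text \<open>Above the base of any column, the \<open>k\<close>-th level of the tower starts at height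
  \<open>column_time k\<close> (see \<open>birkhoff_sum_base\<close>).\<close>

definition column_time :: "nat \<Rightarrow> real" where
  "column_time k = birkhoff_sum (staircase_T r) roof k 0"

definition tower_height :: "nat \<Rightarrow> real" where
  "tower_height n = column_time (stair_height r n)"

lemma roof_le: "roof x \<le> p"
  using q_less_p by (simp add: two_wise_roof_def)

lemma roof_in_stair_level: "in_stair_level r n k x \<Longrightarrow> roof x = roof (stair_level r n k)"
  using stair_level_bounds[of k n] unfolding in_stair_level_def two_wise_roof_def by auto

lemma birkhoff_sum_base:
  assumes "0 \<le> x" "x < stair_width r n" "k \<le> stair_height r n"
  shows "birkhoff_sum (staircase_T r) roof k x = column_time k"
  using assms(3)
proof (induction k)
  case (Suc k)
  then have k: "k < stair_height r n" by simp
  have "in_stair_level r n k (y + stair_level r n k)" if "0 \<le> y" "y < stair_width r n" for y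
    using that k unfolding in_stair_level_def by simp
  then have "roof ((staircase_T r ^^ k) y) = roof (stair_level r n k)"
    if "0 \<le> y" "y < stair_width r n" for y
    using that funpow_staircase_T_base[OF that k] roof_in_stair_level by simp
  then show ?case
    using Suc assms(1,2) stair_width_pos[of n]
    by (simp add: birkhoff_sum_Suc column_time_def)
qed (simp add: column_time_def)

lemma column_time_Suc:
  "k < stair_height r n \<Longrightarrow> column_time (Suc k) = column_time k + roof (stair_level r n k)"
  using funpow_staircase_T_base[of 0 n k] stair_width_pos[of n]
  by (simp add: column_time_def birkhoff_sum_Suc)

lemma column_time_mono: "k \<le> m \<Longrightarrow> column_time k \<le> column_time m"
  unfolding column_time_def by (rule birkhoff_sum_mono)

lemma column_time_nonneg: "0 \<le> column_time k"
  unfolding column_time_def by (rule birkhoff_sum_nonneg)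

lemma tower_height_ge: "real (Suc n) * q \<le> tower_height n"
proof -
  have "real (Suc n) * q \<le> real (stair_height r n) * q"
    using stair_height_ge[of n] q_pos by (intro mult_right_mono) auto
  also have "\<dots> \<le> tower_height n"
    unfolding tower_height_def column_time_def by (rule birkhoff_sum_ge)
  finally show ?thesis .
qed

lemma tower_height_mono: "incseq tower_height"
  unfolding tower_height_def
  by (intro incseq_SucI column_time_mono stair_height_le_Suc)

lemma tower_height_tendsto: "filterlim tower_height at_top sequentially"
proof -
  have "q * real n \<le> tower_height n" for n
    using tower_height_ge[of n] q_pos by (simp add: algebra_simps)
  then show ?thesis
    by (intro filterlim_at_top_mono[OF filterlim_tendsto_pos_mult_at_top[OF tendsto_const q_pos
          filterlim_real_sequentially]] always_eventually allI)
qed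

lemma tower_height_nonneg: "0 \<le> tower_height n"
  unfolding tower_height_def by (rule column_time_nonneg)

lemma tower_map_eq:
  assumes "0 \<le> x" "x < stair_width r n" "k < stair_height r n"
    and "column_time k \<le> u" "u < column_time (Suc k)"
  shows "tower_map (x, u) = (x + stair_level r n k, u - column_time k)"
  using susp_flow_0_eqI[of k x u] assms birkhoff_sum_base[OF assms(1,2)]
    funpow_staircase_T_base[OF assms(1-3)] by simp

definition tower_piece :: "nat \<Rightarrow> real \<Rightarrow> real \<Rightarrow> nat \<Rightarrow> (real \<times> real) set" where
  "tower_piece n \<alpha> \<beta> k =
    {0..<stair_width r n} \<times> ({\<alpha>..<\<beta>} \<inter> {column_time k..<column_time (Suc k)})"

lemma sets_tower_piece: "tower_piece n \<alpha> \<beta> k \<in> sets borel"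
  unfolding tower_piece_def by (intro sets_Times_borel) auto

lemma tower_map_piece:
  "k < stair_height r n \<Longrightarrow> z \<in> tower_piece n \<alpha> \<beta> k \<Longrightarrow>
    tower_map z = z + (stair_level r n k, - column_time k)"
  using tower_map_eq[of "fst z" n k "snd z"] unfolding tower_piece_def by (cases z) auto

lemma base_rect_eq_UN_tower_pieces:
  assumes "0 \<le> \<alpha>" "\<beta> \<le> tower_height n"
  shows "base_rect r n \<alpha> \<beta> = (\<Union>k<stair_height r n. tower_piece n \<alpha> \<beta> k)"
proof -
  have "\<exists>k<stair_height r n. column_time k \<le> u \<and> u < column_time (Suc k)"
    if "\<alpha> \<le> u" "u < \<beta>" for u
    using crossing_index[of column_time u "stair_height r n"] that assms
      column_time_def tower_height_def by fastforce
  then show ?thesis unfolding tower_piece_def base_rect_def by fastforce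
qed

lemma disjoint_tower_pieces: "disjoint_family_on (tower_piece n \<alpha> \<beta>) UNIV"
  unfolding disjoint_family_on_def
proof (intro ballI impI)
  fix k1 k2 :: nat assume "k1 \<noteq> k2"
  then have "column_time (Suc k1) \<le> column_time k2 \<or> column_time (Suc k2) \<le> column_time k1"
    using column_time_mono[of "Suc k1" k2] column_time_mono[of "Suc k2" k1] by linarith
  then show "tower_piece n \<alpha> \<beta> k1 \<inter> tower_piece n \<alpha> \<beta> k2 = {}"
    unfolding tower_piece_def by auto
qed

lemma tower_map_piece_in_stair_level:
  assumes "k < stair_height r n" "z \<in> tower_map ` tower_piece n \<alpha> \<beta> k"
  shows "in_stair_level r n k (fst z)"
  using assms tower_map_piece[OF assms(1)]
  unfolding in_stair_level_def tower_piece_def by auto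

lemma disjoint_tower_map_pieces:
  "disjoint_family_on (\<lambda>k. tower_map ` tower_piece n \<alpha> \<beta> k) {..<stair_height r n}"
  unfolding disjoint_family_on_def
proof (intro ballI impI)
  fix k1 k2 assume k: "k1 \<in> {..<stair_height r n}" "k2 \<in> {..<stair_height r n}" "k1 \<noteq> k2"
  show "tower_map ` tower_piece n \<alpha> \<beta> k1 \<inter> tower_map ` tower_piece n \<alpha> \<beta> k2 = {}"
  proof (rule ccontr)
    assume "tower_map ` tower_piece n \<alpha> \<beta> k1 \<inter> tower_map ` tower_piece n \<alpha> \<beta> k2 \<noteq> {}"
    then obtain z where "z \<in> tower_map ` tower_piece n \<alpha> \<beta> k1" "z \<in> tower_map ` tower_piece n \<alpha> \<beta> k2"
      by blast
    then have "in_stair_level r n k1 (fst z)" "in_stair_level r n k2 (fst z)"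
      using tower_map_piece_in_stair_level k by auto
    then show False using in_stair_level_unique k(3) by blast
  qed
qed

lemma sets_tower_image:
  assumes "0 \<le> \<alpha>" "\<beta> \<le> tower_height n"
  shows "tower_map ` base_rect r n \<alpha> \<beta> \<in> sets borel"
  unfolding base_rect_eq_UN_tower_pieces[OF assms]
  by (rule sets_image_piecewise_translation[OF tower_map_piece]) (simp_all add: sets_tower_piece)

lemma emeasure_tower_vimage:
  assumes "0 \<le> \<alpha>" "\<beta> \<le> tower_height n" "E \<in> sets borel"
  shows "emeasure lborel (tower_map -` E \<inter> base_rect r n \<alpha> \<beta>) =
    emeasure lborel (E \<inter> tower_map ` base_rect r n \<alpha> \<beta>)"
  unfolding base_rect_eq_UN_tower_pieces[OF assms(1,2)]
  by (rule emeasure_vimage_piecewise_translation[OF tower_map_piece])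
    (simp_all add: sets_tower_piece disjoint_tower_map_pieces assms(3)
      disjoint_family_on_mono[OF _ disjoint_tower_pieces])

lemma tower_image_subset_susp_space:
  assumes "0 \<le> \<alpha>" "\<beta> \<le> tower_height n"
  shows "tower_map ` base_rect r n \<alpha> \<beta> \<subseteq> susp_space roof"
proof
  fix z assume "z \<in> tower_map ` base_rect r n \<alpha> \<beta>"
  then obtain k x u where k: "k < stair_height r n" "(x, u) \<in> tower_piece n \<alpha> \<beta> k"
    and z: "z = (x + stair_level r n k, u - column_time k)"
    unfolding base_rect_eq_UN_tower_pieces[OF assms] using tower_map_piece by fastforce
  have x: "0 \<le> x" "x < stair_width r n" and u: "column_time k \<le> u" "u < column_time (Suc k)"
    using k(2) unfolding tower_piece_def by auto
  have "in_stair_level r n k (x + stair_level r n k)"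
    using k(1) x unfolding in_stair_level_def by simp
  then have "u - column_time k < roof (x + stair_level r n k)"
    using u column_time_Suc[OF k(1)] roof_in_stair_level by simp
  moreover have "0 \<le> x + stair_level r n k" "x + stair_level r n k < 1"
    using stair_level_bounds[OF k(1)] stair_spacer_start_le_1[of n] x by auto
  ultimately show "z \<in> susp_space roof" unfolding z susp_space_def using u by simp
qed

lemma inj_on_tower_map: "inj_on tower_map (base_rect r n 0 (tower_height n))"
proof (rule inj_onI)
  fix z1 z2
  assume "z1 \<in> base_rect r n 0 (tower_height n)" "z2 \<in> base_rect r n 0 (tower_height n)"
  then obtain k1 k2 where k: "k1 < stair_height r n" "z1 \<in> tower_piece n 0 (tower_height n) k1"
    "k2 < stair_height r n" "z2 \<in> tower_piece n 0 (tower_height n) k2"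
    unfolding base_rect_eq_UN_tower_pieces[OF order.refl order.refl] by blast
  assume eq: "tower_map z1 = tower_map z2"
  have "in_stair_level r n k1 (fst (tower_map z1))" "in_stair_level r n k2 (fst (tower_map z2))"
    using tower_map_piece_in_stair_level[OF k(1) imageI[OF k(2)]]
      tower_map_piece_in_stair_level[OF k(3) imageI[OF k(4)]] .
  then have "k1 = k2" unfolding eq by (rule in_stair_level_unique)
  then show "z1 = z2" using eq tower_map_piece[OF k(1,2)] tower_map_piece[OF k(3,4)] by simp
qed

lemma susp_space_over_column_subset_tower:
  "susp_space roof \<inter> column_set r n \<times> UNIV \<subseteq> tower_map ` base_rect r n 0 (tower_height n)"
proof
  fix z assume "z \<in> susp_space roof \<inter> column_set r n \<times> UNIV"
  then obtain k x' y where z: "z = (x', y)" "0 \<le> y" "y < roof x'"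
    and k: "k < stair_height r n" "in_stair_level r n k x'"
    unfolding susp_space_def column_set_def in_stair_level_def by auto
  let ?x = "x' - stair_level r n k" and ?u = "column_time k + y"
  have "roof x' = column_time (Suc k) - column_time k"
    using roof_in_stair_level[OF k(2)] column_time_Suc[OF k(1)] by simp
  then have "(?x, ?u) \<in> tower_piece n 0 (tower_height n) k"
    using k(2) z column_time_nonneg[of k] column_time_mono[of "Suc k" "stair_height r n"] k(1)
    unfolding tower_piece_def in_stair_level_def tower_height_def by auto
  moreover have "tower_map (?x, ?u) = z"
    using tower_map_piece[OF k(1)] calculation z(1) by simp
  ultimately show "z \<in> tower_map ` base_rect r n 0 (tower_height n)"
    unfolding base_rect_eq_UN_tower_pieces[OF order.refl order.refl] using k(1) by force
qed

lemma measure_tower_image: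
  assumes "0 \<le> \<alpha>" "\<alpha> \<le> \<beta>" "\<beta> \<le> tower_height n"
  shows "measure lborel (tower_map ` base_rect r n \<alpha> \<beta>) = stair_width r n * (\<beta> - \<alpha>)"
proof -
  have "emeasure lborel (tower_map ` base_rect r n \<alpha> \<beta>) = emeasure lborel (base_rect r n \<alpha> \<beta>)"
    using emeasure_tower_vimage[OF assms(1,3), of UNIV] by simp
  also have "\<dots> = ennreal (stair_width r n * (\<beta> - \<alpha>))"
    unfolding base_rect_def using stair_width_pos[of n] assms(2)
    by (simp add: emeasure_lborel_Times ennreal_mult)
  finally show ?thesis
    using stair_width_pos[of n] assms(2) by (simp add: measure_def)
qed

lemma roof_measurable [measurable]: "roof \<in> borel_measurable borel"
  unfolding two_wise_roof_def[abs_def] by measurable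

lemma susp_space_subset: "susp_space roof \<subseteq> {0..<1} \<times> {0..<p}"
  unfolding susp_space_def by clarsimp (meson roof_le less_le_trans)

lemma sets_susp_space [measurable]: "susp_space roof \<in> sets borel"
proof -
  have "susp_space roof = {z \<in> space (borel \<Otimes>\<^sub>M borel).
      0 \<le> fst z \<and> fst z < 1 \<and> 0 \<le> snd z \<and> snd z < roof (fst z)}"
    unfolding susp_space_def by (auto simp: space_pair_measure)
  also have "\<dots> \<in> sets (borel \<Otimes>\<^sub>M borel)" by measurable
  finally show ?thesis by (simp only: borel_prod)
qed

lemma fmeasurable_strip: "{0..<1::real} \<times> {0..<p} \<in> fmeasurable lborel"
proof (rule fmeasurableI)
  show "{0..<1::real} \<times> {0..<p} \<in> sets lborel"
    unfolding sets_lborel by (intro sets_Times_borel atLeastLessThan_borel)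
  show "emeasure lborel ({0..<1::real} \<times> {0..<p}) < \<infinity>"
    using q_pos q_less_p by (simp add: emeasure_lborel_Times atLeastLessThan_borel ennreal_mult_less_top)
qed

lemma susp_space_fmeasurable: "susp_space roof \<in> fmeasurable lborel"
  using fmeasurableI2[OF fmeasurable_strip susp_space_subset] by simp

lemma measure_susp_space_pos: "0 < measure lborel (susp_space roof)"
proof -
  have "{0..<stair_a r} \<times> {0..<q} \<subseteq> susp_space roof"
    using stair_a_le_1 q_less_p unfolding susp_space_def two_wise_roof_def by auto
  then have "measure lborel ({0..<stair_a r} \<times> {0..<q}) \<le> measure lborel (susp_space roof)"
    by (intro measure_mono_fmeasurable susp_space_fmeasurable) (simp_all add: sets_Times_borel)
  moreover have "measure lborel ({0..<stair_a r} \<times> {0..<q}) = stair_a r * q"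
    using stair_a_pos q_pos by (simp add: measure_def emeasure_lborel_Times ennreal_mult[symmetric])
  moreover have "0 < stair_a r * q" using stair_a_pos q_pos by simp
  ultimately show ?thesis by linarith
qed

lemma measure_outside_tower:
  "measure lborel (susp_space roof - tower_map ` base_rect r n 0 (tower_height n)) \<le>
    (1 - stair_spacer_start r (Suc n)) * p"
proof -
  have column_set_sets: "column_set r n \<in> sets borel" unfolding column_set_def by auto
  let ?G = "({0..<1} - column_set r n) \<times> {0..<p}"
  have "susp_space roof - tower_map ` base_rect r n 0 (tower_height n) \<subseteq> ?G"
    using susp_space_over_column_subset_tower[of n] susp_space_subset by auto
  then have "measure lborel (susp_space roof - tower_map ` base_rect r n 0 (tower_height n)) \<le>
      measure lborel ?G"
    using column_set_sets sets_tower_image[of 0 "tower_height n" n]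
    by (intro measure_mono_fmeasurable fmeasurableI2[OF fmeasurable_strip])
      (auto simp: sets_Times_borel)
  also have "measure lborel ?G = (1 - stair_spacer_start r (Suc n)) * p"
  proof -
    have "measure lborel ({0..<1} - column_set r n) = 1 - stair_spacer_start r (Suc n)"
      using measure_Diff[of lborel "{0..<1::real}" "column_set r n"] column_set_sets
        column_set_subset[of n] measure_column_set[of n] by simp
    then show ?thesis
      using column_set_sets q_pos q_less_p stair_spacer_start_le_1[of n]
      by (simp add: measure_def emeasure_lborel_Times enn2real_mult)
  qed
  finally show ?thesis .
qed

section \<open>Invariance of the measure\<close>

abbreviation \<phi> :: "real \<Rightarrow> real \<times> real \<Rightarrow> real \<times> real" where
  "\<phi> \<equiv> susp_flow (staircase_T r) roof"

lemma flow_measurable: "\<phi> t \<in> borel_measurable borel"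
  by (intro susp_flow_measurable staircase_T_measurable roof_measurable)

lemma flow_tower_map: "0 \<le> t \<Longrightarrow> \<phi> t (tower_map z) = tower_map (z + (0, t))"
  using susp_flow_add[of t 0 z] susp_flow_shift[of "staircase_T r" roof t "fst z" "snd z"]
  by (cases z) simp

lemma flow_image_base_rect: "\<phi> s ` base_rect r n \<alpha> \<beta> = tower_map ` base_rect r n (\<alpha> + s) (\<beta> + s)"
proof -
  have "\<phi> s z = tower_map (z + (0, s))" for z
    using susp_flow_shift[of "staircase_T r" roof s "fst z" "snd z"] by (cases z) simp
  then have "\<phi> s ` base_rect r n \<alpha> \<beta> = tower_map ` (\<lambda>z. z + (0, s)) ` base_rect r n \<alpha> \<beta>"
    by (simp add: image_image)
  then show ?thesis by (simp only: translate_base_rect)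
qed

lemma measure_outside_tower_part:
  assumes "0 \<le> \<alpha>" "\<alpha> \<le> \<beta>" "\<beta> \<le> tower_height n"
  shows "measure lborel (susp_space roof - tower_map ` base_rect r n \<alpha> \<beta>) \<le>
    stair_width r n * (tower_height n - (\<beta> - \<alpha>)) + (1 - stair_spacer_start r (Suc n)) * p"
proof -
  let ?\<tau> = "tower_height n" and ?S = "susp_space roof"
  let ?G = "?S - tower_map ` base_rect r n 0 ?\<tau>"
    and ?P = "tower_map ` base_rect r n 0 \<alpha>" and ?Q = "tower_map ` base_rect r n \<beta> ?\<tau>"
  have sets: "?G \<in> sets borel" "?P \<in> sets borel" "?Q \<in> sets borel"
    "tower_map ` base_rect r n \<alpha> \<beta> \<in> sets borel"
    using assms sets_tower_image[of 0 ?\<tau> n] sets_tower_image[of 0 \<alpha> n]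
      sets_tower_image[of \<beta> ?\<tau> n] sets_tower_image[of \<alpha> \<beta> n] by auto
  have "base_rect r n 0 ?\<tau> = base_rect r n 0 \<alpha> \<union> base_rect r n \<alpha> \<beta> \<union> base_rect r n \<beta> ?\<tau>"
    using assms base_rect_split by (metis order_trans)
  then have "?S - tower_map ` base_rect r n \<alpha> \<beta> \<subseteq> ?G \<union> ?P \<union> ?Q" by blast
  moreover have "?G \<union> ?P \<union> ?Q \<in> fmeasurable lborel"
    using sets assms tower_image_subset_susp_space[of 0 \<alpha> n] tower_image_subset_susp_space[of \<beta> ?\<tau> n]
    by (intro fmeasurableI2[OF susp_space_fmeasurable]) auto
  ultimately have "measure lborel (?S - tower_map ` base_rect r n \<alpha> \<beta>) \<le> measure lborel (?G \<union> ?P \<union> ?Q)"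
    using sets by (intro measure_mono_fmeasurable) auto
  also have "\<dots> \<le> measure lborel ?G + measure lborel ?P + measure lborel ?Q"
  proof -
    have "measure lborel (?G \<union> ?P \<union> ?Q) \<le> measure lborel (?G \<union> ?P) + measure lborel ?Q"
      using sets by (intro measure_Un_le) auto
    moreover have "measure lborel (?G \<union> ?P) \<le> measure lborel ?G + measure lborel ?P"
      using sets by (intro measure_Un_le) auto
    ultimately show ?thesis by linarith
  qed
  also have "\<dots> \<le> (1 - stair_spacer_start r (Suc n)) * p + stair_width r n * \<alpha> +
      stair_width r n * (?\<tau> - \<beta>)"
    using measure_outside_tower[of n] measure_tower_image[of 0 \<alpha> n] measure_tower_image[of \<beta> ?\<tau> n]
      assms by simp
  finally show ?thesis by (simp add: algebra_simps)
qed

lemma tower_error_tendsto_0: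
  assumes "f \<longlonglongrightarrow> c"
  shows "(\<lambda>n. stair_width r n * f n + (1 - stair_spacer_start r (Suc n)) * p) \<longlonglongrightarrow> 0"
proof -
  have "(\<lambda>n. stair_width r n * f n + (1 - stair_spacer_start r (Suc n)) * p) \<longlonglongrightarrow> 0 * c + (1 - 1) * p"
    by (intro tendsto_intros assms stair_width_tendsto_0 stair_spacer_start_tendsto_1)
  then show ?thesis by simp
qed

lemma vimage_flow_tower_map:
  assumes "0 \<le> t"
  shows "tower_map -` \<phi> t -` B \<inter> base_rect r n \<alpha> \<beta> =
    (\<lambda>z. z + (0, t)) -` (tower_map -` B \<inter> base_rect r n (\<alpha> + t) (\<beta> + t))"
proof (rule set_eqI)
  fix z :: "real \<times> real"
  obtain x u where z: "z = (x, u)" by fastforce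
  have "\<phi> t (tower_map z) = tower_map (x, u + t)" using flow_tower_map[OF assms, of z] z by simp
  moreover have "z \<in> base_rect r n \<alpha> \<beta> \<longleftrightarrow> (x, u + t) \<in> base_rect r n (\<alpha> + t) (\<beta> + t)"
    unfolding z base_rect_def by auto
  ultimately show "z \<in> tower_map -` \<phi> t -` B \<inter> base_rect r n \<alpha> \<beta> \<longleftrightarrow>
      z \<in> (\<lambda>z. z + (0, t)) -` (tower_map -` B \<inter> base_rect r n (\<alpha> + t) (\<beta> + t))"
    using z by simp
qed

lemma emeasure_flow_vimage_tower:
  assumes "0 \<le> t" "t \<le> tower_height n" "B \<in> sets borel"
  shows "emeasure lborel (\<phi> t -` B \<inter> tower_map ` base_rect r n 0 (tower_height n - t)) =
    emeasure lborel (B \<inter> tower_map ` base_rect r n t (tower_height n))"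
proof -
  have "emeasure lborel (\<phi> t -` B \<inter> tower_map ` base_rect r n 0 (tower_height n - t)) =
      emeasure lborel (tower_map -` \<phi> t -` B \<inter> base_rect r n 0 (tower_height n - t))"
    using emeasure_tower_vimage[of 0 "tower_height n - t" n "\<phi> t -` B"]
      measurable_sets_borel[OF flow_measurable assms(3)] assms(1) by simp
  also have "tower_map -` \<phi> t -` B \<inter> base_rect r n 0 (tower_height n - t) =
      (\<lambda>z. z + (0, t)) -` (tower_map -` B \<inter> base_rect r n t (tower_height n))"
    using vimage_flow_tower_map[OF assms(1), of B n 0 "tower_height n - t"] by simp
  also have "emeasure lborel \<dots> = emeasure lborel (tower_map -` B \<inter> base_rect r n t (tower_height n))"
    using measurable_sets_borel[OF flow_measurable[of 0] assms(3)] sets_base_rect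
    by (intro emeasure_lborel_translation_vimage) auto
  also have "\<dots> = emeasure lborel (B \<inter> tower_map ` base_rect r n t (tower_height n))"
    using emeasure_tower_vimage[of t "tower_height n" n B] assms by simp
  finally show ?thesis .
qed

lemma measure_flow_vimage_approx:
  assumes "0 \<le> t" "t \<le> tower_height n" "B \<in> sets borel"
  shows "\<bar>measure lborel (\<phi> t -` B \<inter> susp_space roof) - measure lborel (B \<inter> susp_space roof)\<bar> \<le>
    2 * (stair_width r n * t + (1 - stair_spacer_start r (Suc n)) * p)"
proof -
  let ?\<tau> = "tower_height n" and ?S = "susp_space roof" and ?X = "\<phi> t -` B"
  let ?A1 = "tower_map ` base_rect r n 0 (?\<tau> - t)" and ?A2 = "tower_map ` base_rect r n t ?\<tau>"
  let ?\<epsilon> = "stair_width r n * t + (1 - stair_spacer_start r (Suc n)) * p"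
  have X: "?X \<in> sets borel" using measurable_sets_borel[OF flow_measurable assms(3)] .
  have A: "?A1 \<in> sets borel" "?A1 \<subseteq> ?S" "?A2 \<in> sets borel" "?A2 \<subseteq> ?S"
    using assms sets_tower_image tower_image_subset_susp_space by auto
  have "\<bar>measure lborel (?X \<inter> ?S) - measure lborel (?X \<inter> ?A1)\<bar> \<le> measure lborel (?S - ?A1)"
    using A X by (intro measure_Int_diff_le susp_space_fmeasurable) auto
  also have "\<dots> \<le> ?\<epsilon>"
    using measure_outside_tower_part[of 0 "?\<tau> - t" n] assms by simp
  finally have X_close: "\<bar>measure lborel (?X \<inter> ?S) - measure lborel (?X \<inter> ?A1)\<bar> \<le> ?\<epsilon>" .
  have "\<bar>measure lborel (B \<inter> ?S) - measure lborel (B \<inter> ?A2)\<bar> \<le> measure lborel (?S - ?A2)"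
    using A assms(3) by (intro measure_Int_diff_le susp_space_fmeasurable) auto
  also have "\<dots> \<le> ?\<epsilon>"
    using measure_outside_tower_part[of t ?\<tau> n] assms by simp
  finally have B_close: "\<bar>measure lborel (B \<inter> ?S) - measure lborel (B \<inter> ?A2)\<bar> \<le> ?\<epsilon>" .
  have "measure lborel (?X \<inter> ?A1) = measure lborel (B \<inter> ?A2)"
    using emeasure_flow_vimage_tower[OF assms] by (simp add: measure_def)
  then show ?thesis using X_close B_close by (auto simp: abs_le_iff)
qed

lemma measure_flow_vimage:
  assumes "0 \<le> t" "B \<in> sets borel"
  shows "measure lborel (\<phi> t -` B \<inter> susp_space roof) = measure lborel (B \<inter> susp_space roof)"
proof -
  let ?d = "\<bar>measure lborel (\<phi> t -` B \<inter> susp_space roof) - measure lborel (B \<inter> susp_space roof)\<bar>"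
  have "eventually (\<lambda>n. t \<le> tower_height n) sequentially"
    using tower_height_tendsto by (simp add: filterlim_at_top)
  then have "eventually (\<lambda>n. ?d \<le> 2 * (stair_width r n * t + (1 - stair_spacer_start r (Suc n)) * p))
      sequentially"
    by eventually_elim (rule measure_flow_vimage_approx[OF assms(1) _ assms(2)])
  then have "?d \<le> 2 * 0"
    by (intro tendsto_le[OF trivial_limit_sequentially tendsto_mult_left[OF tower_error_tendsto_0[OF tendsto_const]]
          tendsto_const])
  then show ?thesis by simp
qed

lemma space_susp_measure [simp]: "space (susp_measure roof) = UNIV"
  by (simp add: susp_measure_def)

lemma sets_susp_measure [simp]: "sets (susp_measure roof) = sets borel"
  by (simp add: susp_measure_def)

lemma emeasure_susp_space_finite: "emeasure lborel (susp_space roof) \<noteq> \<infinity>"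
  using susp_space_fmeasurable by (auto simp: fmeasurable_def)

lemma emeasure_susp_space_nonzero: "emeasure lborel (susp_space roof) \<noteq> 0"
  using measure_susp_space_pos by (auto simp: measure_def)

lemma emeasure_susp_measure_space: "emeasure (susp_measure roof) (space (susp_measure roof)) = 1"
  using emeasure_susp_space_finite emeasure_susp_space_nonzero
  by (simp add: susp_measure_def less_top)

lemma measure_susp_measure:
  "B \<in> sets borel \<Longrightarrow>
    measure (susp_measure roof) B = measure lborel (susp_space roof \<inter> B) / measure lborel (susp_space roof)"
  unfolding susp_measure_def
  using emeasure_susp_space_finite emeasure_susp_space_nonzero by simp

lemma measure_preserving_flow: "0 \<le> t \<Longrightarrow> measure_preserving_map (susp_measure roof) (\<phi> t)"
  unfolding susp_measure_def
  by (rule measure_preserving_map_uniform_measure[OF susp_space_fmeasurable])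
    (simp_all add: flow_measurable measure_flow_vimage)

lemma AE_flow_0: "AE z in susp_measure roof. \<phi> 0 z = z"
  unfolding susp_measure_def
  by (rule AE_uniform_measureI[OF sets_susp_space[unfolded sets_lborel[symmetric]]])
    (auto simp: susp_space_def intro!: AE_I2 susp_flow_0_id)

lemma AE_flow_add: "0 \<le> s \<Longrightarrow> AE z in susp_measure roof. \<phi> (s + t) z = \<phi> s (\<phi> t z)"
  by (intro AE_I2 susp_flow_add)

end

section \<open>Rank one\<close>

lemma floor_quotient_bounds:
  fixes \<tau> t :: real
  assumes "0 \<le> \<tau>" "0 < t"
  shows "real (nat \<lfloor>\<tau> / t\<rfloor>) * t \<le> \<tau>" "\<tau> - t < real (nat \<lfloor>\<tau> / t\<rfloor>) * t"
proof -
  have "real (nat \<lfloor>\<tau> / t\<rfloor>) \<le> \<tau> / t" "\<tau> / t < real (nat \<lfloor>\<tau> / t\<rfloor>) + 1"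
    using assms by (simp_all add: floor_le_iff)
  then show "real (nat \<lfloor>\<tau> / t\<rfloor>) * t \<le> \<tau>" "\<tau> - t < real (nat \<lfloor>\<tau> / t\<rfloor>) * t"
    using assms by (simp_all add: le_divide_eq divide_less_eq algebra_simps)
qed

lemma floor_quotient_scales:
  fixes \<tau> t :: "nat \<Rightarrow> real"
  assumes "incseq \<tau>" "filterlim \<tau> at_top sequentially" "\<And>n. 0 \<le> \<tau> n"
    and "decseq t" "t \<longlonglongrightarrow> 0" "\<And>n. 0 < t n"
  shows "incseq (\<lambda>n. nat \<lfloor>\<tau> n / t n\<rfloor>)"
    and "filterlim (\<lambda>n. real (nat \<lfloor>\<tau> n / t n\<rfloor>) * t n) at_top sequentially"
proof -
  show "incseq (\<lambda>n. nat \<lfloor>\<tau> n / t n\<rfloor>)"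
  proof (rule incseq_SucI)
    fix n
    have "\<tau> n / t n \<le> \<tau> (Suc n) / t (Suc n)"
      using assms(1,3,4,6) by (intro frac_le) (auto simp: incseq_Suc_iff decseq_Suc_iff)
    then show "nat \<lfloor>\<tau> n / t n\<rfloor> \<le> nat \<lfloor>\<tau> (Suc n) / t (Suc n)\<rfloor>"
      by (intro nat_mono floor_mono)
  qed
  have "filterlim (\<lambda>n. - t n + \<tau> n) at_top sequentially"
    using filterlim_tendsto_add_at_top[OF tendsto_minus[OF assms(5)] assms(2)] .
  then have "filterlim (\<lambda>n. \<tau> n - t n) at_top sequentially" by simp
  then show "filterlim (\<lambda>n. real (nat \<lfloor>\<tau> n / t n\<rfloor>) * t n) at_top sequentially"
    by (rule filterlim_at_top_mono)
      (intro always_eventually allI less_imp_le floor_quotient_bounds(2) assms(3,6))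
qed

lemma UN_multiples_atLeastLessThan:
  fixes t :: real
  assumes "0 < t"
  shows "(\<Union>k<h. {real k * t..<real (Suc k) * t}) = {0..<real h * t}"
proof (intro equalityI subsetI)
  fix u assume "u \<in> (\<Union>k<h. {real k * t..<real (Suc k) * t})"
  then obtain k where "k < h" "real k * t \<le> u" "u < real (Suc k) * t" by auto
  moreover have "real (Suc k) * t \<le> real h * t"
    using \<open>k < h\<close> assms by (intro mult_right_mono) auto
  moreover have "0 \<le> real k * t" using assms by simp
  ultimately have "0 \<le> u" "u < real h * t" by linarith+
  then show "u \<in> {0..<real h * t}" by simp
next
  fix u assume u: "u \<in> {0..<real h * t}"
  define k where "k = nat \<lfloor>u / t\<rfloor>"
  have "real k \<le> u / t" "u / t < real k + 1" unfolding k_def using u assms by auto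
  then have k: "real k * t \<le> u" "u < real (Suc k) * t"
    using assms by (auto simp: le_divide_eq divide_less_eq algebra_simps)
  then have "real k * t < real h * t" using u by simp
  then have "k < h" using assms by simp
  then show "u \<in> (\<Union>k<h. {real k * t..<real (Suc k) * t})" using k by auto
qed

definition slab_time :: "nat \<Rightarrow> real" where
  "slab_time n = 1 / real (Suc n)"

lemma slab_time_pos: "0 < slab_time n"
  by (simp add: slab_time_def)

lemma decseq_slab_time: "decseq slab_time"
  unfolding slab_time_def by (intro decseq_SucI) (simp add: frac_le)

lemma slab_time_tendsto_0: "slab_time \<longlonglongrightarrow> 0"
  unfolding slab_time_def using LIMSEQ_inverse_real_of_nat by (simp add: inverse_eq_divide)

context staircase_suspension
begin

definition slab_count :: "nat \<Rightarrow> nat" where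
  "slab_count n = nat \<lfloor>tower_height n / slab_time n\<rfloor>"

lemma incseq_slab_count: "incseq slab_count"
  and slab_count_tendsto: "filterlim (\<lambda>n. real (slab_count n) * slab_time n) at_top sequentially"
  unfolding slab_count_def[abs_def]
  using floor_quotient_scales[OF tower_height_mono tower_height_tendsto tower_height_nonneg
      decseq_slab_time slab_time_tendsto_0 slab_time_pos] by simp_all

lemma slab_count_bounds:
  "real (slab_count n) * slab_time n \<le> tower_height n"
  "tower_height n - slab_time n < real (slab_count n) * slab_time n"
  unfolding slab_count_def using floor_quotient_bounds[OF tower_height_nonneg slab_time_pos] by auto

lemma flow_slab:
  "\<phi> (real k * slab_time n) ` base_rect r n 0 (slab_time n) =
    tower_map ` base_rect r n (real k * slab_time n) (real (Suc k) * slab_time n)"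
proof -
  have "real (Suc k) * slab_time n = slab_time n + real k * slab_time n"
    by (simp add: distrib_right)
  then show ?thesis using flow_image_base_rect[of "real k * slab_time n" n 0 "slab_time n"] by simp
qed

lemma slab_le_tower_height:
  assumes "k < slab_count n"
  shows "real (Suc k) * slab_time n \<le> tower_height n"
proof -
  have "real (Suc k) * slab_time n \<le> real (slab_count n) * slab_time n"
    using assms slab_time_pos[of n] by (intro mult_right_mono) auto
  then show ?thesis using slab_count_bounds(1)[of n] by linarith
qed

lemma sets_flow_slab:
  "k < slab_count n \<Longrightarrow> \<phi> (real k * slab_time n) ` base_rect r n 0 (slab_time n) \<in> sets borel"
  unfolding flow_slab using slab_le_tower_height slab_time_pos
  by (intro sets_tower_image) (simp_all add: less_imp_le)

lemma disjoint_flow_slabs: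
  assumes "k1 < slab_count n" "k2 < slab_count n" "k1 \<noteq> k2"
  shows "\<phi> (real k1 * slab_time n) ` base_rect r n 0 (slab_time n) \<inter>
    \<phi> (real k2 * slab_time n) ` base_rect r n 0 (slab_time n) = {}"
proof -
  let ?t = "slab_time n" and ?R = "base_rect r n 0 (tower_height n)"
  let ?slab = "\<lambda>k. base_rect r n (real k * ?t) (real (Suc k) * ?t)"
  have sub: "?slab k \<subseteq> ?R" if "k < slab_count n" for k
  proof -
    have "0 \<le> real k * ?t" using slab_time_pos[of n] by simp
    then show ?thesis using slab_le_tower_height[OF that] unfolding base_rect_def by auto
  qed
  have "real (Suc k1) \<le> real k2 \<or> real (Suc k2) \<le> real k1" using assms(3) by linarith
  then have "real (Suc k1) * ?t \<le> real k2 * ?t \<or> real (Suc k2) * ?t \<le> real k1 * ?t"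
    using slab_time_pos[of n] mult_right_mono[of _ _ ?t] by auto
  then have "?slab k1 \<inter> ?slab k2 = {}" unfolding base_rect_def by auto
  then show ?thesis
    unfolding flow_slab inj_on_image_Int[OF inj_on_tower_map sub[OF assms(1)] sub[OF assms(2)], symmetric]
    by simp
qed

lemma UN_flow_slabs:
  "(\<Union>k<slab_count n. \<phi> (real k * slab_time n) ` base_rect r n 0 (slab_time n)) =
    tower_map ` base_rect r n 0 (real (slab_count n) * slab_time n)"
proof -
  have "(\<Union>k<slab_count n. base_rect r n (real k * slab_time n) (real (Suc k) * slab_time n)) =
      {0..<stair_width r n} \<times> (\<Union>k<slab_count n. {real k * slab_time n..<real (Suc k) * slab_time n})"
    unfolding base_rect_def by auto
  also have "\<dots> = base_rect r n 0 (real (slab_count n) * slab_time n)"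
    unfolding UN_multiples_atLeastLessThan[OF slab_time_pos] base_rect_def ..
  finally show ?thesis unfolding flow_slab image_UN[symmetric] by (rule arg_cong)
qed

lemma measure_outside_slabs_tendsto_0:
  "(\<lambda>n. measure (susp_measure roof) (space (susp_measure roof) -
      (\<Union>k<slab_count n. \<phi> (real k * slab_time n) ` base_rect r n 0 (slab_time n)))) \<longlonglongrightarrow> 0"
proof -
  let ?S = "susp_space roof" and ?h = "\<lambda>n. real (slab_count n) * slab_time n"
  let ?\<epsilon> = "\<lambda>n. (stair_width r n * slab_time n + (1 - stair_spacer_start r (Suc n)) * p) /
    measure lborel ?S"
  have bound: "measure (susp_measure roof) (UNIV - tower_map ` base_rect r n 0 (?h n)) \<le> ?\<epsilon> n"
    for n
  proof -
    have sets: "UNIV - tower_map ` base_rect r n 0 (?h n) \<in> sets borel"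
      using sets_tower_image[OF order.refl slab_count_bounds(1)] by auto
    have "measure lborel (?S - tower_map ` base_rect r n 0 (?h n)) \<le>
        stair_width r n * (tower_height n - ?h n) + (1 - stair_spacer_start r (Suc n)) * p"
      using measure_outside_tower_part[OF order.refl _ slab_count_bounds(1)] slab_time_pos[of n]
      by simp
    also have "\<dots> \<le> stair_width r n * slab_time n + (1 - stair_spacer_start r (Suc n)) * p"
      using slab_count_bounds(2)[of n] stair_width_pos[of n] by simp
    finally have "measure lborel (?S \<inter> (UNIV - tower_map ` base_rect r n 0 (?h n))) \<le>
        stair_width r n * slab_time n + (1 - stair_spacer_start r (Suc n)) * p"
      by (simp add: Diff_eq)
    then show ?thesis
      unfolding measure_susp_measure[OF sets]
      by (rule divide_right_mono) (use measure_susp_space_pos in simp)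
  qed
  have lim: "?\<epsilon> \<longlonglongrightarrow> 0"
    using tendsto_divide_zero[OF tower_error_tendsto_0[OF slab_time_tendsto_0]] .
  show ?thesis
    unfolding UN_flow_slabs space_susp_measure
    by (rule tendsto_sandwich[OF always_eventually always_eventually tendsto_const lim])
      (simp_all add: bound)
qed

end

theorem lemma6p4:
  fixes r :: "nat \<Rightarrow> nat" and p q :: real
  assumes "staircase_seq r"
    and "p > q" and "q > 0"
    and "rationally_independent p q"
  shows "rank_one_flow (susp_measure (two_wise_roof r p q))
           (susp_flow (staircase_T r) (two_wise_roof r p q))"
proof -
  interpret staircase_suspension r p q
    using assms(1-3) by unfold_locales
  show ?thesis
    unfolding rank_one_flow_def
    using emeasure_susp_measure_space measure_preserving_flow AE_flow_0 AE_flow_add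
      decseq_slab_time incseq_slab_count slab_time_tendsto_0 slab_count_tendsto
      sets_base_rect sets_flow_slab disjoint_flow_slabs measure_outside_slabs_tendsto_0
    by (intro conjI exI[of _ "\<lambda>n. base_rect r n 0 (slab_time n)"] exI[of _ slab_time]
        exI[of _ slab_count]) auto
qed

end
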